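(* In the setting where $\psi$ is a helicoidal elliptic improper affine map with Weierstrass data $G=ae^z$, $F=-ae^{-z}$ ($a\neq0$), $c\in\mathbb{R}\setminus\{0\}$, $b=\sqrt{1+4a^2c}$, and $\widetilde\psi$ is the improper affine map with Weierstrass data $(G+R,\,F+\tfrac{1}{cR})$ where $R=\frac{e^{z}}{2ac}\frac{1+b+(1-b)ke^{bz}}{1+ke^{bz}}$, $k\in\mathbb{C}$: if $b=n/m\in\mathbb{Q}\setminus\{0,1\}$ with $n/m$ irreducible, then $\widetilde\psi$ is $2m\pi$-periodic in one variable, its singular set is contained in a compact set, and it has $2n$ complete embedded ends of revolution type.
   Context: An elliptic improper affine map on a Riemann surface is an improper affine sphere with affine normal $(0,0,1)$ allowed to have singular points where the affine metric degenerates but the affine conormal is well defined; it is represented by holomorphic Weierstrass data $(G,F)$ via $\psi=(G+\overline F,\ \tfrac12|G|^2-\tfrac12|F|^2+\mathrm{Re}(GF)-2\mathrm{Re}\int F\,dG)$, with affine metric $|dG|^2-|dF|^2$. It is helicoidal if $FG$ is a negative-square constant $-a^2$. An end of revolution type is an end asymptotic to an end of a rotational improper affine map (Weierstrass data $(z,\pm r^2/z)$ on $\mathbb{C}\setminus\{0\}$). *)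

theory Defs
  imports "HOL-Analysis.Analysis"
begin

text \<open>Points of R^3 are written as pairs (x, t) with x :: complex the horizontal
  coordinates and t :: real the coordinate in the direction of the affine normal (0,0,1).\<close>

text \<open>The (possibly multivalued) primitive Re (integral F dG) is encoded by a real function h
  whose differential is Re(F dG).\<close>
definition iam_map ::
  "complex set \<Rightarrow> (complex \<Rightarrow> complex) \<Rightarrow> (complex \<Rightarrow> complex) \<Rightarrow> (complex \<Rightarrow> complex \<times> real) \<Rightarrow> bool"
where
  "iam_map U G F \<psi> \<longleftrightarrow> open U \<and> G holomorphic_on U \<and> F holomorphic_on U \<and>
     (\<exists>h :: complex \<Rightarrow> real.
        (\<forall>z\<in>U. (h has_derivative (\<lambda>v. Re (F z * deriv G z * v))) (at z)) \<and>
        (\<forall>z\<in>U. \<psi> z = (G z + cnj (F z),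
                         (cmod (G z))\<^sup>2 / 2 - (cmod (F z))\<^sup>2 / 2 + Re (G z * F z) - 2 * h z)))"

text \<open>Singular set: points where the affine metric |dG|^2 - |dF|^2 degenerates.\<close>
definition singular_set ::
  "complex set \<Rightarrow> (complex \<Rightarrow> complex) \<Rightarrow> (complex \<Rightarrow> complex) \<Rightarrow> complex set" where
  "singular_set U G F = {z \<in> U. cmod (deriv G z) = cmod (deriv F z)}"

definition rotational_iam :: "(complex \<Rightarrow> complex \<times> real) \<Rightarrow> bool" where
  "rotational_iam \<psi>0 \<longleftrightarrow> (\<exists>\<epsilon> r :: real. (\<epsilon> = 1 \<or> \<epsilon> = -1) \<and> r > 0 \<and>
      iam_map (- {0}) (\<lambda>w. w) (\<lambda>w. complex_of_real (\<epsilon> * r\<^sup>2) / w) \<psi>0)"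

definition end_revolution_type ::
  "complex set \<Rightarrow> (complex \<Rightarrow> complex \<times> real) \<Rightarrow> complex \<Rightarrow> bool" where
  "end_revolution_type U \<psi> p \<longleftrightarrow>
     (\<exists>\<psi>0 T \<rho> S \<phi> \<phi>'. rotational_iam \<psi>0 \<and> \<rho> > 0 \<and> ball p \<rho> - {p} \<subseteq> U \<and>
        open S \<and> 0 \<notin> S \<and> homeomorphism (ball p \<rho> - {p}) S \<phi> \<phi>' \<and>
        (filterlim \<phi> at_infinity (at p) \<or> (\<phi> \<longlongrightarrow> 0) (at p)) \<and>
        ((\<lambda>z. \<psi> z - (\<psi>0 (\<phi> z) + T)) \<longlongrightarrow> 0) (at p))"

definition complete_end ::
  "complex set \<Rightarrow> (complex \<Rightarrow> complex) \<Rightarrow> (complex \<Rightarrow> complex) \<Rightarrow> complex \<Rightarrow> bool" where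
  "complete_end U G F p \<longleftrightarrow>
     (\<exists>\<rho>>0. ball p \<rho> - {p} \<subseteq> U \<and>
        (\<forall>\<gamma> \<gamma>' :: real \<Rightarrow> complex.
           (\<forall>t\<in>{0..<1}. (\<gamma> has_vector_derivative \<gamma>' t) (at t within {0..<1})) \<and>
           continuous_on {0..<1} \<gamma>' \<and> \<gamma> ` {0..<1} \<subseteq> ball p \<rho> - {p} \<and>
           (\<gamma> \<longlongrightarrow> p) (at_left 1)
           \<longrightarrow> \<not> ((\<lambda>t. sqrt ((cmod (deriv G (\<gamma> t)))\<^sup>2 + (cmod (deriv F (\<gamma> t)))\<^sup>2) * norm (\<gamma>' t))
                    integrable_on {0..<1})))"

definition embedded_end :: "complex set \<Rightarrow> (complex \<Rightarrow> complex \<times> real) \<Rightarrow> complex \<Rightarrow> bool" where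
  "embedded_end U \<psi> p \<longleftrightarrow> (\<exists>\<rho>>0. ball p \<rho> - {p} \<subseteq> U \<and> inj_on \<psi> (ball p \<rho> - {p}))"

end

theory Submission
  imports Defs "HOL-Real_Asymp.Real_Asymp" "HOL-Complex_Analysis.Complex_Analysis"
begin

text \<open>The transformed data are rational in \<open>e\<^sup>z\<close> and \<open>u = e\<^bsup>bz\<^esup>\<close>. As \<open>u\<close> has period
  \<open>2\<pi>i/b = 2m\<pi>i/n\<close>, everything is \<open>2m\<pi>i\<close>-periodic, and a period strip contains \<open>n\<close> zeros
  of each of \<open>D\<^sub>1 = 1 + k u\<close> and \<open>D\<^sub>2 = 1 + b + (1 - b) k u\<close>, the denominator and numerator
  of \<open>R\<close>. These are the only points where the data are singular: \<open>G\<close> has a simple pole at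
  the zeros of \<open>D\<^sub>1\<close>, \<open>F\<close> at those of \<open>D\<^sub>2\<close>, and the other datum stays holomorphic.
  Near such a pole the horizontal part \<open>G + cnj F\<close> is injective, since a simple pole
  dominates any Lipschitz perturbation, paths into the pole have infinite length, and the height
  differs from \<open>\<plusminus>|G + cnj F - T|\<^sup>2/2\<close> by a convergent term. Up to the radial
  reparametrisation \<open>s \<mapsto> sqrt (s\<^sup>2 + 4 ln s)\<close> this is the asymptotics of the rotational map with
  data \<open>(w, 1/w)\<close>. Finally \<open>|dG| = |dF|\<close> reads \<open>e\<^bsup>Re z\<^esup> |D\<^sub>2|\<^sup>2 = 4 a\<^sup>2 |c| |D\<^sub>1|\<^sup>2\<close>; the left side
  wins as \<open>Re z \<rightarrow> \<infinity>\<close> (growth \<open>e\<^bsup>(1+2b) Re z\<^esup>\<close> against \<open>e\<^bsup>2b Re z\<^esup>\<close>) and the right side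
  as \<open>Re z \<rightarrow> -\<infinity>\<close>, so the singular set lies in a vertical strip.\<close>

section \<open>Ends of the rotational model\<close>

definition psi_rot :: "complex \<Rightarrow> complex \<times> real" where
  "psi_rot w = (w + cnj (1 / w),
     (cmod w)\<^sup>2 / 2 - (cmod (1 / w))\<^sup>2 / 2 + Re (w * (1 / w)) - 2 * ln (cmod w))"

lemma has_derivative_ln_cmod:
  assumes "z \<noteq> 0"
  shows "((\<lambda>w. ln (cmod w)) has_derivative (\<lambda>v. Re (v / z))) (at z)"
proof -
  have "((\<lambda>w. ln (cmod w)) has_derivative (\<lambda>v. inverse (cmod z) * (v \<bullet> sgn z))) (at z)"
    using assms by (auto intro!: derivative_eq_intros has_derivative_norm)
  moreover have "inverse (cmod z) * (v \<bullet> sgn z) = Re (v / z)" for v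
  proof -
    have "Re (v / z) = Re (cnj z * v) / (cmod z)\<^sup>2"
      using complex_div_cnj[of v z] by (simp add: mult.commute Re_divide_of_real)
    then show ?thesis
      using assms by (simp add: sgn_div_norm inner_complex_def power2_eq_square field_simps)
  qed
  ultimately show ?thesis by simp
qed

lemma rotational_iam_psi_rot: "rotational_iam psi_rot"
  unfolding rotational_iam_def
proof (intro exI conjI)
  show "iam_map (- {0}) (\<lambda>w. w) (\<lambda>w. complex_of_real (1 * 1\<^sup>2) / w) psi_rot"
    unfolding iam_map_def
    by (intro conjI exI[of _ "\<lambda>w. ln (cmod w)"] ballI)
       (auto intro!: holomorphic_intros has_derivative_ln_cmod simp: psi_rot_def)
qed simp_all

lemma psi_rot_reflect: "w \<noteq> 0 \<Longrightarrow> psi_rot (1 / cnj w) = (fst (psi_rot w), 2 - snd (psi_rot w))"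
  unfolding psi_rot_def by (simp add: norm_divide ln_div field_simps)

text \<open>The rotational end is matched with an end whose height is \<open>|Y|\<^sup>2/2\<close> by the radial
  reparametrisation \<open>|w| = \<sigma>(|Y|)\<close> with \<open>\<sigma> s = sqrt (s\<^sup>2 + 4 ln s)\<close>, which absorbs the
  logarithmic term of \<open>psi_rot\<close>.\<close>

definition end_radius :: "real \<Rightarrow> real" where
  "end_radius s = sqrt (s\<^sup>2 + 4 * ln s)"

definition end_stretch :: "complex \<Rightarrow> complex" where
  "end_stretch y = y * complex_of_real (end_radius (cmod y) / cmod y)"

lemma end_radius_gt: "s > 1 \<Longrightarrow> end_radius s > s"
  using real_sqrt_less_mono[of "s\<^sup>2" "s\<^sup>2 + 4 * ln s"] by (simp add: end_radius_def)

lemma end_radius_strict_mono: "1 < s \<Longrightarrow> s < t \<Longrightarrow> end_radius s < end_radius t"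
  unfolding end_radius_def
  by (intro real_sqrt_less_mono add_strict_mono power_strict_mono) auto

lemma norm_end_stretch: "cmod y > 1 \<Longrightarrow> cmod (end_stretch y) = end_radius (cmod y)"
  using end_radius_gt[of "cmod y"] unfolding end_stretch_def norm_mult norm_of_real by auto

lemma inj_on_end_stretch: "inj_on end_stretch {y. cmod y > 1}"
proof (rule inj_onI)
  fix x y assume x: "x \<in> {y. cmod y > 1}" and y: "y \<in> {y. cmod y > 1}"
    and eq: "end_stretch x = end_stretch y"
  then have "end_radius (cmod x) = end_radius (cmod y)"
    by (metis mem_Collect_eq norm_end_stretch)
  then have "cmod x = cmod y"
    using x y end_radius_strict_mono by (metis linorder_neq_iff mem_Collect_eq order_less_irrefl)
  moreover have "y \<noteq> 0" using y by auto
  ultimately show "x = y"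
    using eq x end_radius_gt[of "cmod x"] by (simp add: end_stretch_def)
qed

lemma continuous_on_end_stretch: "continuous_on {y. cmod y > 1} end_stretch"
  unfolding end_stretch_def end_radius_def by (intro continuous_intros) auto

lemma fst_psi_rot_end_stretch:
  assumes "cmod y > 1"
  shows "cmod (fst (psi_rot (end_stretch y)) - y)
           = \<bar>cmod y - end_radius (cmod y) - 1 / end_radius (cmod y)\<bar>"
proof -
  define s where "s = cmod y"
  define \<sigma> where "\<sigma> = end_radius s"
  have s: "s > 1" and \<sigma>: "\<sigma> > 0"
    using assms end_radius_gt[of s] by (simp_all add: s_def \<sigma>_def)
  have "cnj y = complex_of_real (s\<^sup>2) / y"
    using complex_norm_square[of y] s by (auto simp: s_def field_simps)
  then have "fst (psi_rot (end_stretch y)) - y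
      = y * (complex_of_real (\<sigma> / s) + complex_of_real (1 / (s * \<sigma>)) - 1)"
    using s \<sigma> unfolding psi_rot_def end_stretch_def s_def[symmetric] \<sigma>_def[symmetric]
    by (simp add: field_simps power2_eq_square)
  also have "\<dots> = y * complex_of_real ((\<sigma> + 1 / \<sigma>) / s - 1)"
    using s \<sigma> by (simp add: field_simps)
  finally have "cmod (fst (psi_rot (end_stretch y)) - y) = s * \<bar>(\<sigma> + 1 / \<sigma>) / s - 1\<bar>"
    by (simp only: norm_mult norm_of_real s_def)
  also have "\<dots> = \<bar>s - \<sigma> - 1 / \<sigma>\<bar>"
    using s by (simp add: abs_mult[symmetric] field_simps abs_minus_commute)
  finally show ?thesis by (simp add: s_def \<sigma>_def)
qed

lemma snd_psi_rot_end_stretch: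
  assumes "cmod y > 1"
  shows "snd (psi_rot (end_stretch y)) - (cmod y)\<^sup>2 / 2 - 1
           = 2 * ln (cmod y) - 2 * ln (end_radius (cmod y)) - 1 / (2 * (end_radius (cmod y))\<^sup>2)"
proof -
  define s where "s = cmod y"
  have s: "s > 1" and \<sigma>: "end_radius s > 0"
    using assms end_radius_gt[of s] by (simp_all add: s_def)
  have "(end_radius s)\<^sup>2 = s\<^sup>2 + 4 * ln s"
    using s by (simp add: end_radius_def)
  then show ?thesis
    using norm_end_stretch[OF assms] \<sigma>
    unfolding psi_rot_def s_def[symmetric]
    by (auto simp: norm_divide field_simps power2_eq_square)
qed

lemma psi_rot_end_stretch_asymptotics:
  assumes "filterlim (\<lambda>x. cmod (Y x)) at_top F"
  shows "((\<lambda>x. fst (psi_rot (end_stretch (Y x))) - Y x) \<longlongrightarrow> 0) F"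
    and "((\<lambda>x. snd (psi_rot (end_stretch (Y x))) - (cmod (Y x))\<^sup>2 / 2 - 1) \<longlongrightarrow> 0) F"
proof -
  have big: "eventually (\<lambda>x. cmod (Y x) > 1) F"
    using assms by (simp add: filterlim_at_top_dense)
  have "((\<lambda>s. s - end_radius s - 1 / end_radius s) \<longlongrightarrow> 0) at_top"
    unfolding end_radius_def by real_asymp
  then have "((\<lambda>x. \<bar>cmod (Y x) - end_radius (cmod (Y x)) - 1 / end_radius (cmod (Y x))\<bar>) \<longlongrightarrow> 0) F"
    using filterlim_compose[OF _ assms] tendsto_rabs_zero by blast
  then have "((\<lambda>x. cmod (fst (psi_rot (end_stretch (Y x))) - Y x)) \<longlongrightarrow> 0) F"
    by (rule Lim_transform_eventually)
       (use big in \<open>eventually_elim, simp add: fst_psi_rot_end_stretch\<close>)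
  then show "((\<lambda>x. fst (psi_rot (end_stretch (Y x))) - Y x) \<longlongrightarrow> 0) F"
    by (simp add: tendsto_norm_zero_iff)
  have "((\<lambda>s. 2 * ln s - 2 * ln (end_radius s) - 1 / (2 * (end_radius s)\<^sup>2)) \<longlongrightarrow> 0) at_top"
    unfolding end_radius_def by real_asymp
  from filterlim_compose[OF this assms]
  show "((\<lambda>x. snd (psi_rot (end_stretch (Y x))) - (cmod (Y x))\<^sup>2 / 2 - 1) \<longlongrightarrow> 0) F"
    by (rule Lim_transform_eventually)
       (use big in \<open>eventually_elim, simp add: snd_psi_rot_end_stretch\<close>)
qed

lemma end_revolution_typeI:
  fixes \<phi> :: "complex \<Rightarrow> complex"
  assumes "\<rho> > 0" and "ball p \<rho> - {p} \<subseteq> U"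
    and cont: "continuous_on (ball p \<rho> - {p}) \<phi>" and inj: "inj_on \<phi> (ball p \<rho> - {p})"
    and "0 \<notin> \<phi> ` (ball p \<rho> - {p})"
    and "filterlim \<phi> at_infinity (at p) \<or> (\<phi> \<longlongrightarrow> 0) (at p)"
    and "((\<lambda>z. \<psi> z - (psi_rot (\<phi> z) + T)) \<longlongrightarrow> 0) (at p)"
  shows "end_revolution_type U \<psi> p"
proof -
  have D: "open (ball p \<rho> - {p})" by auto
  obtain \<phi>' where "homeomorphism (ball p \<rho> - {p}) (\<phi> ` (ball p \<rho> - {p})) \<phi> \<phi>'"
    using invariance_of_domain_homeomorphism[OF D cont _ inj] by auto
  moreover have "open (\<phi> ` (ball p \<rho> - {p}))" by (rule invariance_of_domain[OF cont D inj])
  ultimately show ?thesis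
    unfolding end_revolution_type_def using assms rotational_iam_psi_rot by blast
qed

lemma end_stretch_comp:
  assumes contY: "continuous_on D Y" and injY: "inj_on Y D" and Y1: "\<And>z. z \<in> D \<Longrightarrow> cmod (Y z) > 1"
  shows "continuous_on D (\<lambda>z. end_stretch (Y z))" "inj_on (\<lambda>z. end_stretch (Y z)) D"
    "\<forall>z\<in>D. cmod (Y z) < cmod (end_stretch (Y z))"
proof -
  have DY: "Y ` D \<subseteq> {y. cmod y > 1}" using Y1 by auto
  show "continuous_on D (\<lambda>z. end_stretch (Y z))"
    by (rule continuous_on_compose2[OF continuous_on_end_stretch contY DY])
  show "inj_on (\<lambda>z. end_stretch (Y z)) D"
    using injY inj_on_subset[OF inj_on_end_stretch DY] by (auto simp: inj_on_def)
  show "\<forall>z\<in>D. cmod (Y z) < cmod (end_stretch (Y z))"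
    using Y1 end_radius_gt norm_end_stretch by auto
qed

text \<open>The reflection \<open>w \<mapsto> 1 / cnj w\<close> of \<open>psi_rot\<close> flips the sign of the height,
  so both signs of \<open>\<kappa>\<close> are matched by a rotational end: at infinity for \<open>+\<close>, at \<open>0\<close> for \<open>-\<close>.\<close>

lemma rotational_end_matching:
  fixes Y :: "complex \<Rightarrow> complex"
  assumes contY: "continuous_on D Y" and injY: "inj_on Y D" and Y1: "\<And>z. z \<in> D \<Longrightarrow> cmod (Y z) > 1"
    and evD: "eventually (\<lambda>z. z \<in> D) (at p)" and normY: "filterlim (\<lambda>z. cmod (Y z)) at_top (at p)"
    and \<kappa>: "\<kappa> = 1 \<or> \<kappa> = -1"
  obtains \<phi> where "continuous_on D \<phi>" "inj_on \<phi> D" "0 \<notin> \<phi> ` D"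
    "filterlim \<phi> at_infinity (at p) \<or> (\<phi> \<longlongrightarrow> 0) (at p)"
    "((\<lambda>z. fst (psi_rot (\<phi> z)) - Y z) \<longlongrightarrow> 0) (at p)"
    "((\<lambda>z. snd (psi_rot (\<phi> z)) - \<kappa> * (cmod (Y z))\<^sup>2 / 2 - 1) \<longlongrightarrow> 0) (at p)"
proof -
  define v where "v z = end_stretch (Y z)" for z
  note v = end_stretch_comp[OF contY injY Y1, folded v_def]
  have norm_v: "cmod (v z) > cmod (Y z)" "v z \<noteq> 0" if "z \<in> D" for z
    using v(3) that by auto
  note R = psi_rot_end_stretch_asymptotics[OF normY, folded v_def]
  from \<kappa> show thesis
  proof
    assume "\<kappa> = 1"
    have "filterlim v at_infinity (at p)"
      by (rule filterlim_norm_at_top_imp_at_infinity, rule filterlim_at_top_mono[OF normY])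
         (use evD in \<open>eventually_elim, use norm_v in force\<close>)
    moreover have "0 \<notin> v ` D" using norm_v by auto
    ultimately show thesis
      using that[OF v(1,2)] R \<open>\<kappa> = 1\<close> by simp
  next
    assume "\<kappa> = -1"
    define w where "w z = 1 / cnj (v z)" for z
    have "(w \<longlongrightarrow> 0) (at p)"
    proof (rule Lim_null_comparison)
      show "eventually (\<lambda>z. norm (w z) \<le> inverse (cmod (Y z))) (at p)"
        using evD
      proof eventually_elim
        case (elim z)
        then have "0 < cmod (Y z)" "cmod (Y z) < cmod (v z)" using Y1 norm_v by force+
        then show ?case by (simp add: w_def norm_divide divide_simps)
      qed
    qed (rule tendsto_inverse_0_at_top[OF normY])
    moreover have "continuous_on D w" "inj_on w D" "0 \<notin> w ` D"
      using v(2) norm_v by (auto intro!: continuous_intros v(1) simp: w_def inj_on_def)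
    moreover have "((\<lambda>z. fst (psi_rot (w z)) - Y z) \<longlongrightarrow> 0) (at p)"
      using R(1) by (rule Lim_transform_eventually)
        (use evD in \<open>eventually_elim, simp add: w_def psi_rot_reflect norm_v\<close>)
    moreover have "((\<lambda>z. snd (psi_rot (w z)) - \<kappa> * (cmod (Y z))\<^sup>2 / 2 - 1) \<longlongrightarrow> - 0) (at p)"
      using tendsto_minus[OF R(2)] by (rule Lim_transform_eventually)
        (use evD in \<open>eventually_elim, simp add: w_def psi_rot_reflect norm_v \<open>\<kappa> = -1\<close>\<close>)
    ultimately show thesis
      using that[of w] by simp
  qed
qed

lemma end_revolution_type_of_asymptotics:
  fixes \<psi> :: "complex \<Rightarrow> complex \<times> real" and X :: "complex \<Rightarrow> complex"
  assumes r: "r > 0" and sub: "ball p r - {p} \<subseteq> U"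
    and contX: "continuous_on (ball p r - {p}) X" and injX: "inj_on X (ball p r - {p})"
    and infX: "filterlim X at_infinity (at p)"
    and fst_\<psi>: "\<forall>z\<in>ball p r - {p}. fst (\<psi> z) = X z"
    and \<kappa>: "\<kappa> = 1 \<or> \<kappa> = -1"
    and lim: "((\<lambda>z. snd (\<psi> z) - \<kappa> * (cmod (X z - T\<^sub>1))\<^sup>2 / 2) \<longlongrightarrow> C\<^sub>0) (at p)"
  shows "end_revolution_type U \<psi> p"
proof -
  define Y where "Y z = X z - T\<^sub>1" for z
  have normY: "filterlim (\<lambda>z. cmod (Y z)) at_top (at p)"
    unfolding Y_def using tendsto_add_filterlim_at_infinity[OF tendsto_const infX, of "-T\<^sub>1"]
    by (simp add: filterlim_at_infinity_imp_norm_at_top)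
  then obtain d where d: "d > 0" and Y1: "\<And>z. z \<in> ball p d - {p} \<Longrightarrow> cmod (Y z) > 1"
    unfolding filterlim_at_top_dense eventually_at by (force simp: dist_commute)
  define \<rho> where "\<rho> = min r d"
  define D where "D = ball p \<rho> - {p}"
  have \<rho>: "\<rho> > 0" and DU: "D \<subseteq> ball p r - {p}" and DY: "\<And>z. z \<in> D \<Longrightarrow> cmod (Y z) > 1"
    using r d Y1 by (auto simp: \<rho>_def D_def)
  have evD: "eventually (\<lambda>z. z \<in> D) (at p)"
    unfolding D_def using \<rho> by (intro eventually_at_in_open) auto
  have "continuous_on D Y" "inj_on Y D"
    using continuous_on_subset[OF contX DU] inj_on_subset[OF injX DU]
    by (auto intro!: continuous_intros simp: Y_def inj_on_def)
  then obtain \<phi> where \<phi>: "continuous_on D \<phi>" "inj_on \<phi> D" "0 \<notin> \<phi> ` D"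
    "filterlim \<phi> at_infinity (at p) \<or> (\<phi> \<longlongrightarrow> 0) (at p)"
    and R: "((\<lambda>z. fst (psi_rot (\<phi> z)) - Y z) \<longlongrightarrow> 0) (at p)"
      "((\<lambda>z. snd (psi_rot (\<phi> z)) - \<kappa> * (cmod (Y z))\<^sup>2 / 2 - 1) \<longlongrightarrow> 0) (at p)"
    using rotational_end_matching[OF _ _ DY evD normY \<kappa>] by blast
  have E: "((\<lambda>z. snd (\<psi> z) - \<kappa> * (cmod (Y z))\<^sup>2 / 2 - C\<^sub>0) \<longlongrightarrow> 0) (at p)"
    using tendsto_diff[OF lim tendsto_const[of C\<^sub>0]] unfolding Y_def by simp
  have "eventually (\<lambda>z. (- (fst (psi_rot (\<phi> z)) - Y z), (snd (\<psi> z) - \<kappa> * (cmod (Y z))\<^sup>2 / 2 - C\<^sub>0)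
      - (snd (psi_rot (\<phi> z)) - \<kappa> * (cmod (Y z))\<^sup>2 / 2 - 1)) = \<psi> z - (psi_rot (\<phi> z) + (T\<^sub>1, C\<^sub>0 - 1)))
      (at p)" (is "eventually (\<lambda>z. ?P z = _) _")
    using evD
  proof eventually_elim
    case (elim z)
    then have "fst (\<psi> z) = X z" using fst_\<psi> DU by auto
    then show ?case by (simp add: Y_def prod_eq_iff)
  qed
  moreover have "(?P \<longlongrightarrow> 0) (at p)"
    using tendsto_Pair[OF tendsto_minus[OF R(1)] tendsto_diff[OF E R(2)]] by (simp add: zero_prod_def)
  ultimately have "((\<lambda>z. \<psi> z - (psi_rot (\<phi> z) + (T\<^sub>1, C\<^sub>0 - 1))) \<longlongrightarrow> 0) (at p)"
    by (rule Lim_transform_eventually[rotated])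
  then show ?thesis
    using end_revolution_typeI[OF \<rho> _ \<phi>[unfolded D_def]] DU sub by (auto simp: D_def)
qed

section \<open>Ends at simple poles of the Weierstrass data\<close>

lemma norm_diff_comp_le_integral:
  fixes G :: "complex \<Rightarrow> complex" and \<gamma> \<gamma>' :: "real \<Rightarrow> complex"
  assumes hol: "G holomorphic_on S" and S: "open S"
    and \<gamma>: "\<forall>s\<in>{0..<1}. (\<gamma> has_vector_derivative \<gamma>' s) (at s within {0..<1})"
    and \<gamma>S: "\<gamma> ` {0..<1} \<subseteq> S"
    and f: "f integrable_on {0..<1}" "\<And>s. cmod (deriv G (\<gamma> s)) * norm (\<gamma>' s) \<le> f s"
    and t: "t \<in> {0..<1}"
  shows "cmod (G (\<gamma> t) - G (\<gamma> 0)) \<le> integral {0..t} f"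
proof -
  have sub: "{0..t} \<subseteq> {0..<1}" using t by auto
  have "((G \<circ> \<gamma>) has_vector_derivative \<gamma>' s * deriv G (\<gamma> s)) (at s within {0..t})"
    if "s \<in> {0..t}" for s
  proof (rule field_vector_diff_chain_within)
    show "(\<gamma> has_vector_derivative \<gamma>' s) (at s within {0..t})"
      using \<gamma> that sub has_vector_derivative_within_subset by blast
    show "(G has_field_derivative deriv G (\<gamma> s)) (at (\<gamma> s) within \<gamma> ` {0..t})"
      using holomorphic_derivI[OF hol S] \<gamma>S that sub by blast
  qed
  then have int: "((\<lambda>s. \<gamma>' s * deriv G (\<gamma> s)) has_integral G (\<gamma> t) - G (\<gamma> 0)) {0..t}"
    using fundamental_theorem_of_calculus[of 0 t "G \<circ> \<gamma>"] t by auto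
  have "cmod (G (\<gamma> t) - G (\<gamma> 0)) = norm (integral {0..t} (\<lambda>s. \<gamma>' s * deriv G (\<gamma> s)))"
    using int by (simp add: integral_unique)
  also have "\<dots> \<le> integral {0..t} f"
    using int integrable_on_subinterval[OF f(1) sub] f(2)
    by (intro integral_norm_bound_integral) (auto simp: norm_mult mult.commute)
  finally show ?thesis .
qed

lemma bounded_along_path_of_finite_length:
  fixes G :: "complex \<Rightarrow> complex" and \<gamma> \<gamma>' :: "real \<Rightarrow> complex"
  assumes hol: "G holomorphic_on S" and S: "open S"
    and \<gamma>: "\<forall>s\<in>{0..<1}. (\<gamma> has_vector_derivative \<gamma>' s) (at s within {0..<1})"
    and \<gamma>S: "\<gamma> ` {0..<1} \<subseteq> S"
    and f: "f integrable_on {0..<1}" "\<And>s. cmod (deriv G (\<gamma> s)) * norm (\<gamma>' s) \<le> f s"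
  obtains M where "\<And>t. t \<in> {0..<1} \<Longrightarrow> cmod (G (\<gamma> t)) \<le> M"
proof -
  have f0: "0 \<le> f s" for s using f(2)[of s] by (meson norm_ge_zero order.trans zero_le_mult_iff)
  have f1: "f integrable_on {0..1}"
    by (rule integrable_spike_set[OF f(1)]) (auto intro: negligible_subset[of "{1}"])
  have "cmod (G (\<gamma> t)) \<le> cmod (G (\<gamma> 0)) + integral {0..1} f" if t: "t \<in> {0..<1}" for t
  proof -
    have "cmod (G (\<gamma> t) - G (\<gamma> 0)) \<le> integral {0..t} f"
      by (rule norm_diff_comp_le_integral[OF hol S \<gamma> \<gamma>S f t])
    also have "\<dots> \<le> integral {0..1} f"
      using t f0 by (intro integral_subset_le integrable_on_subinterval[OF f(1)] f1) auto
    finally show ?thesis using norm_triangle_ineq2[of "G (\<gamma> t)" "G (\<gamma> 0)"] by simp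
  qed
  then show thesis by (rule that)
qed

text \<open>A path towards a pole of \<open>G\<close> must have infinite \<open>|dG|\<close>-length, which bounds
  the length for \<open>|dG|\<^sup>2 + |dF|\<^sup>2\<close> from below.\<close>

lemma complete_end_at_pole:
  fixes G F :: "complex \<Rightarrow> complex"
  assumes r: "r > 0" and sub: "ball p r - {p} \<subseteq> U"
    and hol: "G holomorphic_on ball p r - {p}" and inf: "filterlim G at_infinity (at p)"
  shows "complete_end U G F p"
  unfolding complete_end_def
proof (intro exI[of _ r] conjI allI impI notI)
  fix \<gamma> \<gamma>' :: "real \<Rightarrow> complex"
  assume "(\<forall>t\<in>{0..<1}. (\<gamma> has_vector_derivative \<gamma>' t) (at t within {0..<1})) \<and>
      continuous_on {0..<1} \<gamma>' \<and> \<gamma> ` {0..<1} \<subseteq> ball p r - {p} \<and> (\<gamma> \<longlongrightarrow> p) (at_left 1)"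
  then have \<gamma>: "\<forall>t\<in>{0..<1}. (\<gamma> has_vector_derivative \<gamma>' t) (at t within {0..<1})"
    and \<gamma>S: "\<gamma> ` {0..<1} \<subseteq> ball p r - {p}" and \<gamma>p: "(\<gamma> \<longlongrightarrow> p) (at_left 1)" by auto
  assume "(\<lambda>t. sqrt ((cmod (deriv G (\<gamma> t)))\<^sup>2 + (cmod (deriv F (\<gamma> t)))\<^sup>2) * norm (\<gamma>' t))
            integrable_on {0..<1}"
  moreover have "cmod (deriv G (\<gamma> t)) * norm (\<gamma>' t)
      \<le> sqrt ((cmod (deriv G (\<gamma> t)))\<^sup>2 + (cmod (deriv F (\<gamma> t)))\<^sup>2) * norm (\<gamma>' t)" for t
    by (intro mult_right_mono real_sqrt_sum_squares_ge1) simp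
  moreover have "open (ball p r - {p})" by auto
  ultimately obtain M where M: "\<And>t. t \<in> {0..<1} \<Longrightarrow> cmod (G (\<gamma> t)) \<le> M"
    using bounded_along_path_of_finite_length[OF hol _ \<gamma> \<gamma>S] by blast
  have ev01: "eventually (\<lambda>t. t \<in> {0<..<1}) (at_left (1::real))"
    by (rule eventually_at_left_real) simp
  have "eventually (\<lambda>t. \<gamma> t \<noteq> p) (at_left 1)"
    using ev01 by eventually_elim (use \<gamma>S in force)
  with \<gamma>p have "filterlim (\<lambda>t. G (\<gamma> t)) at_infinity (at_left 1)"
    by (intro filterlim_compose[OF inf] filterlim_atI)
  then have "eventually (\<lambda>t. max M 0 + 1 \<le> cmod (G (\<gamma> t))) (at_left 1)"
    unfolding filterlim_at_infinity[OF order_refl] by (simp add: add_nonneg_pos)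
  with ev01 have "eventually (\<lambda>t. False) (at_left (1::real))"
  proof eventually_elim
    case (elim t)
    then show False using M[of t] by simp
  qed
  then show False by (simp add: trivial_limit_at_left_real)
qed (use r sub in auto)

lemma complete_end_commute: "complete_end U G F p = complete_end U F G p"
  unfolding complete_end_def by (simp add: add.commute)

lemma tendsto_quotient_at_simple_zero:
  fixes N D :: "complex \<Rightarrow> complex"
  assumes "(N has_field_derivative N') (at p)" and "(D has_field_derivative D') (at p)"
    and "N p = 0" and "D p = 0" and "D' \<noteq> 0"
  shows "((\<lambda>z. N z / D z) \<longlongrightarrow> N' / D') (at p)"
proof -
  have "((\<lambda>z. ((N z - N p) / (z - p)) / ((D z - D p) / (z - p))) \<longlongrightarrow> N' / D') (at p)"
    using assms by (intro tendsto_divide) (auto simp: has_field_derivative_iff)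
  moreover have "eventually (\<lambda>z. ((N z - N p) / (z - p)) / ((D z - D p) / (z - p)) = N z / D z) (at p)"
    unfolding eventually_at by (auto intro!: exI[of _ 1] simp: assms)
  ultimately show ?thesis by (rule Lim_transform_eventually)
qed

lemma deriv_close_on_ball:
  fixes f :: "complex \<Rightarrow> complex"
  assumes "f holomorphic_on ball p r" and "r > 0" and "e > 0"
  obtains \<delta> where "\<delta> > 0" "\<delta> \<le> r" "\<And>z. z \<in> ball p \<delta> \<Longrightarrow> cmod (deriv f z - deriv f p) < e"
proof -
  have "continuous_on (ball p r) (deriv f)"
    using holomorphic_deriv[OF assms(1)] by (simp add: holomorphic_on_imp_continuous_on)
  then have "isCont (deriv f) p" using assms(2) by (simp add: continuous_on_interior)
  then obtain d where "d > 0" "\<And>z. dist z p < d \<Longrightarrow> dist (deriv f z) (deriv f p) < e"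
    using assms(3) unfolding continuous_at_eps_delta by blast
  then show thesis
    using that[of "min d r"] assms(2) by (auto simp: dist_norm norm_minus_commute)
qed

lemma norm_diff_linear_le_on_ball:
  fixes f :: "complex \<Rightarrow> complex"
  assumes hol: "f holomorphic_on ball p r" and "\<delta> \<le> r"
    and bound: "\<And>z. z \<in> ball p \<delta> \<Longrightarrow> cmod (deriv f z - c) \<le> K"
    and "z \<in> ball p \<delta>" and "w \<in> ball p \<delta>"
  shows "cmod ((f z - c * z) - (f w - c * w)) \<le> K * cmod (z - w)"
proof (rule field_differentiable_bound[where f = "\<lambda>z. f z - c * z" and S = "ball p \<delta>"])
  fix x assume x: "x \<in> ball p \<delta>"
  then have "(f has_field_derivative deriv f x) (at x within ball p \<delta>)"
    using holomorphic_derivI[OF hol] assms(2) by fastforce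
  then show "((\<lambda>z. f z - c * z) has_field_derivative deriv f x - c) (at x within ball p \<delta>)"
    by (auto intro!: derivative_eq_intros)
qed (use assms in auto)

lemma simple_zero_bilipschitz:
  fixes \<Phi> :: "complex \<Rightarrow> complex"
  assumes r: "r > 0" and hol: "\<Phi> holomorphic_on ball p r" and "\<Phi> p = 0" and d: "deriv \<Phi> p \<noteq> 0"
  obtains \<delta> where "\<delta> > 0" "\<delta> \<le> r"
    "\<And>z w. z \<in> ball p \<delta> \<Longrightarrow> w \<in> ball p \<delta> \<Longrightarrow>
       cmod (deriv \<Phi> p) / 2 * cmod (z - w) \<le> cmod (\<Phi> z - \<Phi> w)"
    "\<And>z. z \<in> ball p \<delta> \<Longrightarrow> cmod (\<Phi> z) \<le> 2 * cmod (deriv \<Phi> p) * cmod (z - p)"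
proof -
  define d where "d = deriv \<Phi> p"
  obtain \<delta> where \<delta>: "\<delta> > 0" "\<delta> \<le> r" and close: "\<And>z. z \<in> ball p \<delta> \<Longrightarrow> cmod (deriv \<Phi> z - d) < cmod d / 2"
    using deriv_close_on_ball[OF hol r, of "cmod d / 2"] d by (auto simp: d_def)
  have lin: "cmod ((\<Phi> z - \<Phi> w) - d * (z - w)) \<le> cmod d / 2 * cmod (z - w)"
    if "z \<in> ball p \<delta>" "w \<in> ball p \<delta>" for z w
    using norm_diff_linear_le_on_ball[OF hol \<delta>(2) _ that, of d "cmod d / 2"] close
    by (force simp: algebra_simps)
  show thesis
  proof (rule that[OF \<delta>, folded d_def])
    fix z w assume "z \<in> ball p \<delta>" "w \<in> ball p \<delta>"
    from lin[OF this] show "cmod d / 2 * cmod (z - w) \<le> cmod (\<Phi> z - \<Phi> w)"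
      using norm_triangle_ineq2[of "d * (z - w)" "(\<Phi> z - \<Phi> w)"]
      by (simp add: norm_mult norm_minus_commute)
  next
    fix z assume "z \<in> ball p \<delta>"
    with lin[of z p] \<delta> assms(3) have "cmod (\<Phi> z - d * (z - p)) \<le> cmod d / 2 * cmod (z - p)"
      by simp
    moreover have "cmod (\<Phi> z) \<le> cmod (\<Phi> z - d * (z - p)) + cmod d * cmod (z - p)"
      using norm_triangle_ineq2[of "\<Phi> z" "d * (z - p)"] by (simp add: norm_mult)
    moreover have "0 \<le> cmod d * cmod (z - p)" by simp
    ultimately show "cmod (\<Phi> z) \<le> 2 * cmod d * cmod (z - p)" by linarith
  qed
qed

lemma holomorphic_lipschitz_near:
  fixes H :: "complex \<Rightarrow> complex"
  assumes r: "r > 0" and hol: "H holomorphic_on ball p r"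
  obtains \<delta> M where "\<delta> > 0" "\<delta> \<le> r" "M > 0"
    "\<And>z w. z \<in> ball p \<delta> \<Longrightarrow> w \<in> ball p \<delta> \<Longrightarrow> cmod (H z - H w) \<le> M * cmod (z - w)"
proof -
  obtain \<delta> where \<delta>: "\<delta> > 0" "\<delta> \<le> r" and close: "\<And>z. z \<in> ball p \<delta> \<Longrightarrow> cmod (deriv H z - deriv H p) < 1"
    using deriv_close_on_ball[OF hol r, of 1] by auto
  have "cmod (deriv H z - 0) \<le> cmod (deriv H p) + 1" if "z \<in> ball p \<delta>" for z
    using close[OF that] norm_triangle_ineq2[of "deriv H z" "deriv H p"] by simp
  then show thesis
    using that[OF \<delta>, of "cmod (deriv H p) + 1"] norm_diff_linear_le_on_ball[OF hol \<delta>(2), of 0]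
    by (simp add: add_nonneg_pos)
qed

lemma norm_diff_inverse_lower_bound:
  fixes x y :: complex
  assumes d: "d > 0" and "x \<noteq> 0" "y \<noteq> 0" and xy: "cmod x \<le> 2 * d * \<rho>" "cmod y \<le> 2 * d * \<rho>"
    and lower: "d / 2 * q \<le> cmod (x - y)"
  shows "q \<le> 8 * d * \<rho>\<^sup>2 * cmod (1 / x - 1 / y)"
proof -
  have "0 < 2 * d * \<rho>" using assms(2) xy(1) by (meson less_le_trans zero_less_norm_iff)
  then have \<rho>: "\<rho> > 0" using d by (simp add: zero_less_mult_iff)
  have "cmod x * cmod y \<le> (2 * d * \<rho>) * (2 * d * \<rho>)"
    using xy \<rho> d by (intro mult_mono) auto
  then have "d / 2 * q / ((2 * d * \<rho>) * (2 * d * \<rho>)) \<le> cmod (x - y) / (cmod x * cmod y)"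
    using lower assms(2,3) by (intro frac_le) auto
  also have "\<dots> = cmod (1 / x - 1 / y)"
    using assms(2,3) by (simp add: field_simps norm_divide norm_mult norm_minus_commute)
  finally show ?thesis
    using d \<rho> by (simp add: field_simps power2_eq_square)
qed

text \<open>Near a simple pole \<open>1/\<Phi>\<close> differences grow like \<open>|z - w| / |z - p|\<^sup>2\<close>, which beats the
  Lipschitz bound of any holomorphic perturbation.\<close>

lemma inj_on_inverse_plus_cnj:
  fixes \<Phi> H :: "complex \<Rightarrow> complex"
  assumes r: "r > 0" and hol\<Phi>: "\<Phi> holomorphic_on ball p r" and holH: "H holomorphic_on ball p r"
    and \<Phi>p: "\<Phi> p = 0" and d\<Phi>: "deriv \<Phi> p \<noteq> 0"
  obtains \<rho> where "\<rho> > 0" "\<rho> \<le> r" "\<And>z. z \<in> ball p \<rho> - {p} \<Longrightarrow> \<Phi> z \<noteq> 0"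
    "inj_on (\<lambda>z. 1 / \<Phi> z + cnj (H z)) (ball p \<rho> - {p})"
proof -
  define d where "d = cmod (deriv \<Phi> p)"
  have d: "d > 0" using d\<Phi> by (simp add: d_def)
  obtain \<delta>\<^sub>1 where \<delta>\<^sub>1: "\<delta>\<^sub>1 > 0" "\<delta>\<^sub>1 \<le> r"
    and lower: "\<And>z w. z \<in> ball p \<delta>\<^sub>1 \<Longrightarrow> w \<in> ball p \<delta>\<^sub>1 \<Longrightarrow> d / 2 * cmod (z - w) \<le> cmod (\<Phi> z - \<Phi> w)"
    and upper: "\<And>z. z \<in> ball p \<delta>\<^sub>1 \<Longrightarrow> cmod (\<Phi> z) \<le> 2 * d * cmod (z - p)"
    using simple_zero_bilipschitz[OF r hol\<Phi> \<Phi>p d\<Phi>] unfolding d_def by blast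
  obtain \<delta>\<^sub>2 M where \<delta>\<^sub>2: "\<delta>\<^sub>2 > 0" "\<delta>\<^sub>2 \<le> r" and M: "M > 0"
    and lip: "\<And>z w. z \<in> ball p \<delta>\<^sub>2 \<Longrightarrow> w \<in> ball p \<delta>\<^sub>2 \<Longrightarrow> cmod (H z - H w) \<le> M * cmod (z - w)"
    using holomorphic_lipschitz_near[OF r holH] by blast
  define \<rho> where "\<rho> = min (min \<delta>\<^sub>1 \<delta>\<^sub>2) (sqrt (1 / (16 * d * M)))"
  have \<rho>: "\<rho> > 0" "\<rho> \<le> r" and \<rho>\<delta>: "ball p \<rho> \<subseteq> ball p \<delta>\<^sub>1" "ball p \<rho> \<subseteq> ball p \<delta>\<^sub>2"
    using \<delta>\<^sub>1 \<delta>\<^sub>2 d M by (auto simp: \<rho>_def)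
  have "\<rho>\<^sup>2 \<le> (sqrt (1 / (16 * d * M)))\<^sup>2"
    using \<rho> by (intro power_mono) (auto simp: \<rho>_def)
  then have \<rho>sq: "8 * d * \<rho>\<^sup>2 * M \<le> 1 / 2"
    using d M by (simp add: field_simps)
  have nz: "\<Phi> z \<noteq> 0" if "z \<in> ball p \<rho> - {p}" for z
  proof -
    have "z \<in> ball p \<delta>\<^sub>1" using that \<rho>\<delta> by auto
    then have "d / 2 * cmod (z - p) \<le> cmod (\<Phi> z)"
      using lower[of z p] \<delta>\<^sub>1 \<Phi>p by simp
    moreover have "0 < d / 2 * cmod (z - p)" using that d by simp
    ultimately show ?thesis by auto
  qed
  have upper\<rho>: "cmod (\<Phi> z) \<le> 2 * d * \<rho>" if "z \<in> ball p \<rho>" for z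
  proof -
    have "cmod (z - p) \<le> \<rho>" using that by (simp add: dist_norm norm_minus_commute)
    then have "2 * d * cmod (z - p) \<le> 2 * d * \<rho>" using d by (intro mult_left_mono) auto
    moreover have "z \<in> ball p \<delta>\<^sub>1" using that \<rho>\<delta> by auto
    ultimately show ?thesis using upper[of z] by linarith
  qed
  have "inj_on (\<lambda>z. 1 / \<Phi> z + cnj (H z)) (ball p \<rho> - {p})"
  proof (rule inj_onI, rule ccontr)
    fix z w assume z: "z \<in> ball p \<rho> - {p}" and w: "w \<in> ball p \<rho> - {p}" and "z \<noteq> w"
      and eq: "1 / \<Phi> z + cnj (H z) = 1 / \<Phi> w + cnj (H w)"
    then have "1 / \<Phi> z - 1 / \<Phi> w = cnj (H w - H z)"
      by (simp add: algebra_simps)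
    then have "cmod (1 / \<Phi> z - 1 / \<Phi> w) = cmod (H z - H w)"
      by (simp only: complex_mod_cnj norm_minus_commute)
    also have "\<dots> \<le> M * cmod (z - w)"
      using z w \<rho>\<delta> by (intro lip) auto
    finally have "cmod (1 / \<Phi> z - 1 / \<Phi> w) \<le> M * cmod (z - w)" .
    moreover have "cmod (z - w) \<le> 8 * d * \<rho>\<^sup>2 * cmod (1 / \<Phi> z - 1 / \<Phi> w)"
      using z w \<rho>\<delta> by (intro norm_diff_inverse_lower_bound[OF d nz nz upper\<rho> upper\<rho> lower]) auto
    ultimately have "cmod (z - w) \<le> 8 * d * \<rho>\<^sup>2 * M * cmod (z - w)"
      using d by (smt (verit) mult_left_mono zero_le_power2 mult.assoc mult_nonneg_nonneg)
    also have "\<dots> \<le> 1 / 2 * cmod (z - w)"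
      using \<rho>sq by (intro mult_right_mono) auto
    finally show False using \<open>z \<noteq> w\<close> by simp
  qed
  then show thesis using that \<rho> nz by blast
qed

lemma simple_pole_chart:
  fixes N D H :: "complex \<Rightarrow> complex"
  assumes r: "r > 0" and holN: "N holomorphic_on ball p r" and holD: "D holomorphic_on ball p r"
    and holH: "H holomorphic_on ball p r" and N: "\<And>z. z \<in> ball p r \<Longrightarrow> N z \<noteq> 0"
    and D: "D p = 0" "deriv D p \<noteq> 0"
  obtains \<rho> where "\<rho> > 0" "\<rho> \<le> r" "\<And>z. z \<in> ball p \<rho> - {p} \<Longrightarrow> D z \<noteq> 0"
    "inj_on (\<lambda>z. N z / D z + cnj (H z)) (ball p \<rho> - {p})"
    "filterlim (\<lambda>z. N z / D z) at_infinity (at p)"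
proof -
  define \<Phi> where "\<Phi> z = D z / N z" for z
  have hol\<Phi>: "\<Phi> holomorphic_on ball p r"
    unfolding \<Phi>_def using holD holN N by (intro holomorphic_intros)
  have Np: "N p \<noteq> 0" using N r by simp
  have dD: "(D has_field_derivative deriv D p) (at p)" and dN: "(N has_field_derivative deriv N p) (at p)"
    using holD holN r
    by (metis DERIV_deriv_iff_field_differentiable centre_in_ball holomorphic_on_imp_differentiable_at
        open_ball)+
  have "(\<Phi> has_field_derivative (deriv D p * N p - D p * deriv N p) / (N p * N p)) (at p)"
    unfolding \<Phi>_def by (rule DERIV_divide[OF dD dN Np])
  then have "deriv \<Phi> p = deriv D p / N p" using D(1) Np by (simp add: DERIV_imp_deriv)
  then have "deriv \<Phi> p \<noteq> 0" using D(2) Np by simp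
  then obtain \<rho> where \<rho>: "\<rho> > 0" "\<rho> \<le> r" and \<Phi>0: "\<And>z. z \<in> ball p \<rho> - {p} \<Longrightarrow> \<Phi> z \<noteq> 0"
    and inj: "inj_on (\<lambda>z. 1 / \<Phi> z + cnj (H z)) (ball p \<rho> - {p})"
    using inj_on_inverse_plus_cnj[OF r hol\<Phi> holH] D(1) by (auto simp: \<Phi>_def)
  have "filterlim D (at 0) (at p)"
  proof (rule filterlim_atI)
    show "(D \<longlongrightarrow> 0) (at p)"
      using DERIV_isCont[OF dD] D(1) by (simp add: isCont_def)
    show "eventually (\<lambda>z. D z \<noteq> 0) (at p)"
      unfolding eventually_at using \<rho> \<Phi>0 by (auto simp: \<Phi>_def dist_commute intro!: exI[of _ \<rho>])
  qed
  moreover have "(N \<longlongrightarrow> N p) (at p)"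
    using DERIV_isCont[OF dN] by (simp add: isCont_def)
  ultimately have "filterlim (\<lambda>z. N z / D z) at_infinity (at p)"
    using Np by (intro filterlim_divide_at_infinity)
  moreover have "1 / \<Phi> z = N z / D z" for z by (simp add: \<Phi>_def)
  ultimately show thesis
    using that[OF \<rho>] \<Phi>0 inj by (auto simp: \<Phi>_def)
qed

lemma height_identity_pole_G:
  fixes G F F\<^sub>0 :: complex and h K :: real
  shows "(cmod G)\<^sup>2 / 2 - (cmod F)\<^sup>2 / 2 + Re (G * F) - 2 * h - K
           - 1 * (cmod (G + cnj F - 2 * cnj F\<^sub>0))\<^sup>2 / 2
       = - (cmod F)\<^sup>2 - 2 * (h - Re (G * F\<^sub>0)) - K + 2 * Re (cnj F * F\<^sub>0) - 2 * (cmod F\<^sub>0)\<^sup>2"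
  by (simp only: cmod_power2) (simp add: power2_eq_square field_simps)

lemma height_identity_pole_F:
  fixes G F G\<^sub>0 :: complex and h K :: real
  shows "(cmod G)\<^sup>2 / 2 - (cmod F)\<^sup>2 / 2 + Re (G * F) - 2 * h - K
           - (-1) * (cmod (G + cnj F - 2 * G\<^sub>0))\<^sup>2 / 2
       = (cmod G)\<^sup>2 - 2 * Re (G * cnj G\<^sub>0) + 2 * (cmod G\<^sub>0)\<^sup>2 + 2 * Re (F * (G - G\<^sub>0)) - 2 * h - K"
  by (simp only: cmod_power2) (simp add: power2_eq_square field_simps)

lemma nonzero_on_ball_if_continuous:
  fixes f :: "complex \<Rightarrow> complex"
  assumes "continuous_on UNIV f" and "f p \<noteq> 0"
  obtains r where "r > 0" "\<And>z. z \<in> ball p r \<Longrightarrow> f z \<noteq> 0"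
proof -
  have "isCont f p" using assms(1) by (simp add: continuous_on_eq_continuous_at)
  from continuous_at_avoid[OF this assms(2)] show thesis
    using that by (auto simp: dist_commute)
qed

lemma end_properties_at_pole:
  fixes G F :: "complex \<Rightarrow> complex" and \<psi> :: "complex \<Rightarrow> complex \<times> real"
  assumes \<rho>: "\<rho> > 0" and sub: "ball p \<rho> - {p} \<subseteq> U"
    and holG: "G holomorphic_on U" and holF: "F holomorphic_on U"
    and pole: "filterlim G at_infinity (at p) \<or> filterlim F at_infinity (at p)"
    and inj: "inj_on (\<lambda>z. G z + cnj (F z)) (ball p \<rho> - {p})"
    and inf: "filterlim (\<lambda>z. G z + cnj (F z)) at_infinity (at p)"
    and fst_\<psi>: "\<forall>z\<in>ball p \<rho> - {p}. fst (\<psi> z) = G z + cnj (F z)"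
    and \<kappa>: "\<kappa> = 1 \<or> \<kappa> = -1"
    and lim: "((\<lambda>z. snd (\<psi> z) - \<kappa> * (cmod (G z + cnj (F z) - T))\<^sup>2 / 2) \<longlongrightarrow> C) (at p)"
  shows "complete_end U G F p \<and> embedded_end U \<psi> p \<and> end_revolution_type U \<psi> p"
proof (intro conjI)
  have holS: "G holomorphic_on ball p \<rho> - {p}" "F holomorphic_on ball p \<rho> - {p}"
    using holG holF sub by (auto elim: holomorphic_on_subset)
  show "complete_end U G F p"
    using pole complete_end_at_pole[OF \<rho> sub holS(1)] complete_end_at_pole[OF \<rho> sub holS(2)]
    by (auto simp: complete_end_commute[of U G])
  have "inj_on (fst \<circ> \<psi>) (ball p \<rho> - {p})"
    using inj by (rule inj_on_cong[THEN iffD1, rotated]) (simp add: fst_\<psi>)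
  then show "embedded_end U \<psi> p"
    unfolding embedded_end_def using \<rho> sub by (blast dest: inj_on_imageI2)
  have "continuous_on (ball p \<rho> - {p}) (\<lambda>z. G z + cnj (F z))"
    using holS by (intro continuous_intros holomorphic_on_imp_continuous_on)
  from end_revolution_type_of_asymptotics[OF \<rho> sub this inj inf fst_\<psi> \<kappa> lim]
  show "end_revolution_type U \<psi> p" .
qed

section \<open>The transformed Weierstrass data\<close>

lemma transform_G_identity:
  fixes A B C K E V :: complex
  assumes "B\<^sup>2 = 1 + 4 * A\<^sup>2 * C" and "A \<noteq> 0" and "C \<noteq> 0" and "1 + K * V \<noteq> 0"
  shows "A * E + E / (2 * A * C) * ((1 + B + (1 - B) * K * V) / (1 + K * V))
       = E * ((1 + B)\<^sup>2 + (1 - B)\<^sup>2 * K * V) / (4 * A * C * (1 + K * V))"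
proof -
  define D where "D = 1 + K * V"
  have KV: "K * V = D - 1" and "D \<noteq> 0" using assms(4) by (simp_all add: D_def)
  then show ?thesis
    unfolding D_def[symmetric] mult.assoc KV using assms(2,3)
    by (simp add: field_simps) (insert assms(1), algebra)
qed

lemma transform_F_identity:
  fixes A B C K E V :: complex
  assumes "A \<noteq> 0" and "C \<noteq> 0" and "E \<noteq> 0"
    and "1 + K * V \<noteq> 0" and "1 + B + (1 - B) * K * V \<noteq> 0"
  shows "- A * (1 / E) + 1 / (C * (E / (2 * A * C) * ((1 + B + (1 - B) * K * V) / (1 + K * V))))
       = A * ((1 - B) + (1 + B) * K * V) / (E * (1 + B + (1 - B) * K * V))"
proof -
  define D where "D = 1 + K * V"
  define N where "N = 1 + B + (1 - B) * K * V"
  have "(1 - B) + (1 + B) * K * V = 2 * D - N" "D \<noteq> 0" "N \<noteq> 0"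
    using assms(4,5) by (simp_all add: D_def N_def algebra_simps)
  then show ?thesis
    unfolding N_def[symmetric] D_def[symmetric] using assms(1-3)
    by (simp add: field_simps) algebra
qed

lemma has_field_derivative_exp_fraction:
  fixes s B p\<^sub>0 p\<^sub>1 q\<^sub>0 q\<^sub>1 z :: complex
  assumes "q\<^sub>0 + q\<^sub>1 * exp (B * z) \<noteq> 0"
  shows "((\<lambda>z. exp (s * z) * (p\<^sub>0 + p\<^sub>1 * exp (B * z)) / (q\<^sub>0 + q\<^sub>1 * exp (B * z))) has_field_derivative
     exp (s * z) * (s * (p\<^sub>0 + p\<^sub>1 * exp (B * z)) * (q\<^sub>0 + q\<^sub>1 * exp (B * z))
                    + B * exp (B * z) * (p\<^sub>1 * q\<^sub>0 - p\<^sub>0 * q\<^sub>1))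
       / (q\<^sub>0 + q\<^sub>1 * exp (B * z))\<^sup>2) (at z)"
  using assms
  by (auto intro!: derivative_eq_intros simp: power2_eq_square algebra_simps)

lemma transform_dG_identity:
  fixes A B C K E V :: complex
  assumes "A \<noteq> 0" and "C \<noteq> 0" and "1 + K * V \<noteq> 0"
  shows "E * (1 * ((1 + B)\<^sup>2 / (4 * A * C) + (1 - B)\<^sup>2 * K / (4 * A * C) * V) * (1 + K * V)
            + B * V * ((1 - B)\<^sup>2 * K / (4 * A * C) * 1 - (1 + B)\<^sup>2 / (4 * A * C) * K)) / (1 + K * V)\<^sup>2
       = E * (1 + B + (1 - B) * K * V)\<^sup>2 / (4 * A * C * (1 + K * V)\<^sup>2)"
proof -
  define D where "D = 1 + K * V"
  have KV: "K * V = D - 1" and "D \<noteq> 0" using assms(3) by (simp_all add: D_def)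
  from \<open>D \<noteq> 0\<close> show ?thesis
    unfolding D_def[symmetric] using assms(1,2)
    by (simp add: field_simps) (insert KV, algebra)
qed

lemma transform_dF_identity:
  fixes A B C K E V :: complex
  assumes "B\<^sup>2 = 1 + 4 * A\<^sup>2 * C" and "E \<noteq> 0" and "1 + B + (1 - B) * K * V \<noteq> 0"
  shows "(1 / E) * (-1 * (A * (1 - B) + A * (1 + B) * K * V) * ((1 + B) + (1 - B) * K * V)
            + B * V * (A * (1 + B) * K * (1 + B) - A * (1 - B) * ((1 - B) * K)))
          / ((1 + B) + (1 - B) * K * V)\<^sup>2
       = 4 * A ^ 3 * C * (1 + K * V)\<^sup>2 / (E * (1 + B + (1 - B) * K * V)\<^sup>2)"
proof -
  have "-1 * (A * (1 - B) + A * (1 + B) * K * V) * ((1 + B) + (1 - B) * K * V)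
          + B * V * (A * (1 + B) * K * (1 + B) - A * (1 - B) * ((1 - B) * K))
        = 4 * A ^ 3 * C * (1 + K * V)\<^sup>2"
    using assms(1) by algebra
  then show ?thesis using assms(2,3) by (simp add: field_simps)
qed

lemma transform_primitive_identity:
  fixes A B C K E V :: complex
  assumes "B\<^sup>2 = 1 + 4 * A\<^sup>2 * C" and "A \<noteq> 0" and "C \<noteq> 0" and "E \<noteq> 0"
    and "1 + K * V \<noteq> 0" and "1 + B + (1 - B) * K * V \<noteq> 0"
  shows "A * ((1 - B) + (1 + B) * K * V) / E / (1 + B + (1 - B) * K * V)
           * (E * (1 + B + (1 - B) * K * V)\<^sup>2 / (4 * A * C * (1 + K * V)\<^sup>2))
       = - (A\<^sup>2) + B / C * (K * (B * V)) / (1 + K * V)\<^sup>2"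
proof -
  define D where "D = 1 + K * V"
  define N where "N = 1 + B + (1 - B) * K * V"
  have "(1 - B) + (1 + B) * K * V = 2 * D - N" "K * (B * V) = B * (D - 1)"
    "N = 2 * B + (1 - B) * D" "D \<noteq> 0" "N \<noteq> 0"
    using assms(5,6) by (simp_all add: D_def N_def algebra_simps)
  then show ?thesis
    unfolding N_def[symmetric] D_def[symmetric] using assms(1-4)
    by (simp add: field_simps) algebra
qed

locale helicoidal_transform =
  fixes a c b :: real and k :: complex and n m :: nat
  assumes a: "a \<noteq> 0" and c: "c \<noteq> 0" and k: "k \<noteq> 0"
    and b_def: "b = sqrt (1 + 4 * a\<^sup>2 * c)"
    and b_rat: "b = real n / real m" and m: "m > 0"
    and b0: "b \<noteq> 0" and b1: "b \<noteq> 1"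
begin

abbreviation "A \<equiv> complex_of_real a"
abbreviation "B \<equiv> complex_of_real b"
abbreviation "C \<equiv> complex_of_real c"

lemma b_pos: "b > 0"
proof -
  have "b \<ge> 0" using b_rat by simp
  then show ?thesis using b0 by simp
qed

lemma B_squared: "B\<^sup>2 = 1 + 4 * A\<^sup>2 * C"
proof -
  have "1 + 4 * a\<^sup>2 * c \<ge> 0"
    using b_pos b_def real_sqrt_gt_0_iff by (metis less_imp_le)
  then have "b\<^sup>2 = 1 + 4 * a\<^sup>2 * c" using b_def by simp
  from arg_cong[OF this, of complex_of_real] show ?thesis by simp
qed

lemma A_nonzero: "A \<noteq> 0" and C_nonzero: "C \<noteq> 0" and B_nonzero: "B \<noteq> 0"
  and one_minus_B_nonzero: "1 - B \<noteq> 0" and one_plus_B_nonzero: "1 + B \<noteq> 0"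
  using a c b0 b1 b_pos by (simp_all add: complex_eq_iff)

text \<open>The subscript \<open>t\<close> marks the transformed data \<open>G\<^sub>t = G + R\<close>, \<open>F\<^sub>t = F + 1 / (c R)\<close>, where
  \<open>R z = exp z / (2 a c) * D\<^sub>2 z / D\<^sub>1 z\<close>. On \<open>U\<^sub>t\<close> they equal \<open>G\<^sub>e\<^sub>x\<^sub>t = G\<^sub>n\<^sub>u\<^sub>m / D\<^sub>1\<close> and
  \<open>F\<^sub>e\<^sub>x\<^sub>t = F\<^sub>n\<^sub>u\<^sub>m / D\<^sub>2\<close>, formulas which extend \<open>G\<^sub>t\<close> holomorphically across the poles of \<open>F\<^sub>t\<close>
  and vice versa; \<open>h\<^sub>t\<close> is a primitive of \<open>Re (F\<^sub>t dG\<^sub>t)\<close>.\<close>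

definition "u z = exp (B * z)"
definition "D\<^sub>1 z = 1 + k * u z"
definition "D\<^sub>2 z = 1 + B + (1 - B) * k * u z"
definition "D\<^sub>3 z = (1 - B) + (1 + B) * k * u z"
definition "G\<^sub>n\<^sub>u\<^sub>m z = exp z * ((1 + B)\<^sup>2 + (1 - B)\<^sup>2 * k * u z) / (4 * A * C)"
definition "F\<^sub>n\<^sub>u\<^sub>m z = A * D\<^sub>3 z / exp z"
definition "G\<^sub>e\<^sub>x\<^sub>t z = G\<^sub>n\<^sub>u\<^sub>m z / D\<^sub>1 z"
definition "F\<^sub>e\<^sub>x\<^sub>t z = F\<^sub>n\<^sub>u\<^sub>m z / D\<^sub>2 z"
definition "U\<^sub>t = {z. D\<^sub>1 z \<noteq> 0 \<and> D\<^sub>2 z \<noteq> 0}"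

definition "G\<^sub>t = (\<lambda>z. complex_of_real a * exp z + exp z / complex_of_real (2 * a * c) *
    ((1 + complex_of_real b + complex_of_real (1 - b) * k * exp (complex_of_real b * z))
     / (1 + k * exp (complex_of_real b * z))))"
definition "F\<^sub>t = (\<lambda>z. - complex_of_real a * exp (- z) + 1 / (complex_of_real c * (exp z / complex_of_real (2 * a * c) *
    ((1 + complex_of_real b + complex_of_real (1 - b) * k * exp (complex_of_real b * z))
     / (1 + k * exp (complex_of_real b * z))))))"

definition "h\<^sub>t z = - (a\<^sup>2) * Re z - (b / c) * Re (1 / D\<^sub>1 z)"
definition "\<psi>\<^sub>t z = (G\<^sub>t z + cnj (F\<^sub>t z),
    (cmod (G\<^sub>t z))\<^sup>2 / 2 - (cmod (F\<^sub>t z))\<^sup>2 / 2 + Re (G\<^sub>t z * F\<^sub>t z) - 2 * h\<^sub>t z)"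

lemma G\<^sub>t_eq: "z \<in> U\<^sub>t \<Longrightarrow> G\<^sub>t z = G\<^sub>e\<^sub>x\<^sub>t z"
  using transform_G_identity[OF B_squared A_nonzero C_nonzero, of k "u z" "exp z"]
  unfolding G\<^sub>t_def G\<^sub>e\<^sub>x\<^sub>t_def G\<^sub>n\<^sub>u\<^sub>m_def D\<^sub>1_def U\<^sub>t_def u_def by (simp add: mult.assoc)

lemma F\<^sub>t_eq:
  assumes "z \<in> U\<^sub>t"
  shows "F\<^sub>t z = F\<^sub>e\<^sub>x\<^sub>t z"
proof -
  have e: "exp (- z) = 1 / exp z" by (simp add: exp_minus field_simps)
  have "F\<^sub>t z = - A * (1 / exp z)
      + 1 / (C * (exp z / (2 * A * C) * ((1 + B + (1 - B) * k * u z) / (1 + k * u z))))"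
    unfolding F\<^sub>t_def u_def e by simp
  also have "\<dots> = A * ((1 - B) + (1 + B) * k * u z) / (exp z * (1 + B + (1 - B) * k * u z))"
    using assms by (intro transform_F_identity[OF A_nonzero C_nonzero])
      (auto simp: U\<^sub>t_def D\<^sub>1_def D\<^sub>2_def)
  finally show ?thesis
    unfolding F\<^sub>e\<^sub>x\<^sub>t_def F\<^sub>n\<^sub>u\<^sub>m_def D\<^sub>2_def D\<^sub>3_def by simp
qed

lemma has_field_derivative_G\<^sub>e\<^sub>x\<^sub>t:
  assumes "D\<^sub>1 z \<noteq> 0"
  shows "(G\<^sub>e\<^sub>x\<^sub>t has_field_derivative exp z * (D\<^sub>2 z)\<^sup>2 / (4 * A * C * (D\<^sub>1 z)\<^sup>2)) (at z)"
proof -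
  have "G\<^sub>e\<^sub>x\<^sub>t = (\<lambda>z. exp (1 * z) * ((1 + B)\<^sup>2 / (4 * A * C) + (1 - B)\<^sup>2 * k / (4 * A * C) * exp (B * z))
                  / (1 + k * exp (B * z)))"
    using A_nonzero C_nonzero by (auto simp: G\<^sub>e\<^sub>x\<^sub>t_def G\<^sub>n\<^sub>u\<^sub>m_def D\<^sub>1_def u_def field_simps)
  then have "(G\<^sub>e\<^sub>x\<^sub>t has_field_derivative exp (1 * z) * (1 * ((1 + B)\<^sup>2 / (4 * A * C)
        + (1 - B)\<^sup>2 * k / (4 * A * C) * exp (B * z)) * (1 + k * exp (B * z))
        + B * exp (B * z) * ((1 - B)\<^sup>2 * k / (4 * A * C) * 1 - (1 + B)\<^sup>2 / (4 * A * C) * k))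
        / (1 + k * exp (B * z))\<^sup>2) (at z)"
    using assms by (simp only:) (rule has_field_derivative_exp_fraction, simp add: D\<^sub>1_def u_def)
  then show ?thesis
    using transform_dG_identity[OF A_nonzero C_nonzero, of k "exp (B * z)" "exp z"] assms
    by (simp add: D\<^sub>1_def D\<^sub>2_def u_def mult.assoc)
qed

lemma has_field_derivative_F\<^sub>e\<^sub>x\<^sub>t:
  assumes "D\<^sub>2 z \<noteq> 0"
  shows "(F\<^sub>e\<^sub>x\<^sub>t has_field_derivative 4 * A ^ 3 * C * (D\<^sub>1 z)\<^sup>2 / (exp z * (D\<^sub>2 z)\<^sup>2)) (at z)"
proof -
  have "F\<^sub>e\<^sub>x\<^sub>t = (\<lambda>z. exp (-1 * z) * (A * (1 - B) + A * (1 + B) * k * exp (B * z))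
                  / ((1 + B) + (1 - B) * k * exp (B * z)))"
    by (auto simp: F\<^sub>e\<^sub>x\<^sub>t_def F\<^sub>n\<^sub>u\<^sub>m_def D\<^sub>2_def D\<^sub>3_def u_def field_simps exp_minus)
  then have "(F\<^sub>e\<^sub>x\<^sub>t has_field_derivative exp (-1 * z) * (-1 * (A * (1 - B) + A * (1 + B) * k * exp (B * z))
        * ((1 + B) + (1 - B) * k * exp (B * z))
        + B * exp (B * z) * (A * (1 + B) * k * (1 + B) - A * (1 - B) * ((1 - B) * k)))
        / ((1 + B) + (1 - B) * k * exp (B * z))\<^sup>2) (at z)"
    using assms by (simp only:) (rule has_field_derivative_exp_fraction, simp add: D\<^sub>2_def u_def)
  moreover have "exp (-1 * z) = 1 / exp z" by (simp add: exp_minus field_simps)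
  ultimately show ?thesis
    using transform_dF_identity[OF B_squared, of "exp z" k "exp (B * z)"] assms
    by (simp add: D\<^sub>1_def D\<^sub>2_def u_def mult.assoc)
qed

lemma has_field_derivative_D\<^sub>1: "(D\<^sub>1 has_field_derivative k * (B * u z)) (at z)"
  unfolding D\<^sub>1_def u_def by (auto intro!: derivative_eq_intros)

lemma has_field_derivative_D\<^sub>2: "(D\<^sub>2 has_field_derivative (1 - B) * k * (B * u z)) (at z)"
  unfolding D\<^sub>2_def u_def by (auto intro!: derivative_eq_intros)

lemma open_U\<^sub>t: "open U\<^sub>t"
  unfolding U\<^sub>t_def D\<^sub>1_def D\<^sub>2_def u_def
  by (auto intro!: open_Collect_conj open_Collect_neq continuous_intros)

lemma deriv_G\<^sub>t: "z \<in> U\<^sub>t \<Longrightarrow> (G\<^sub>t has_field_derivative exp z * (D\<^sub>2 z)\<^sup>2 / (4 * A * C * (D\<^sub>1 z)\<^sup>2)) (at z)"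
  by (rule has_field_derivative_transform_within_open[OF has_field_derivative_G\<^sub>e\<^sub>x\<^sub>t open_U\<^sub>t])
     (auto simp: U\<^sub>t_def G\<^sub>t_eq)

lemma deriv_F\<^sub>t: "z \<in> U\<^sub>t \<Longrightarrow> (F\<^sub>t has_field_derivative 4 * A ^ 3 * C * (D\<^sub>1 z)\<^sup>2 / (exp z * (D\<^sub>2 z)\<^sup>2)) (at z)"
  by (rule has_field_derivative_transform_within_open[OF has_field_derivative_F\<^sub>e\<^sub>x\<^sub>t open_U\<^sub>t])
     (auto simp: U\<^sub>t_def F\<^sub>t_eq)

lemma holomorphic_G\<^sub>t: "G\<^sub>t holomorphic_on U\<^sub>t" and holomorphic_F\<^sub>t: "F\<^sub>t holomorphic_on U\<^sub>t"
  using deriv_G\<^sub>t deriv_F\<^sub>t open_U\<^sub>t by (auto simp: holomorphic_on_open)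

lemma h\<^sub>t_eq_Re: "h\<^sub>t z = Re (- (A\<^sup>2) * z - (B / C) * (1 / D\<^sub>1 z))"
proof -
  have "Re ((B / C) * (1 / D\<^sub>1 z)) = (b / c) * Re (1 / D\<^sub>1 z)"
    by (simp only: of_real_divide[symmetric] times_complex.sel Re_complex_of_real
        Im_complex_of_real mult_zero_left diff_0_right)
  then show ?thesis by (simp add: h\<^sub>t_def power2_eq_square)
qed

lemma has_derivative_h\<^sub>t:
  assumes z: "z \<in> U\<^sub>t"
  shows "(h\<^sub>t has_derivative (\<lambda>v. Re (F\<^sub>t z * deriv G\<^sub>t z * v))) (at z)"
proof -
  define H where "H z = - (A\<^sup>2) * z - (B / C) * (1 / D\<^sub>1 z)" for z
  have D\<^sub>1: "D\<^sub>1 z \<noteq> 0" "D\<^sub>2 z \<noteq> 0" using z by (auto simp: U\<^sub>t_def)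
  have "(H has_field_derivative
      - (A\<^sup>2) * 1 - (B / C) * ((0 * D\<^sub>1 z - 1 * (k * (B * u z))) / (D\<^sub>1 z * D\<^sub>1 z))) (at z)"
    unfolding H_def
    by (intro DERIV_diff DERIV_cmult DERIV_ident DERIV_divide[OF DERIV_const has_field_derivative_D\<^sub>1 D\<^sub>1(1)])
  also have "- (A\<^sup>2) * 1 - (B / C) * ((0 * D\<^sub>1 z - 1 * (k * (B * u z))) / (D\<^sub>1 z * D\<^sub>1 z))
      = - (A\<^sup>2) + (B / C) * (k * (B * u z)) / (D\<^sub>1 z)\<^sup>2"
    by (simp add: power2_eq_square)
  also have "- (A\<^sup>2) + (B / C) * (k * (B * u z)) / (D\<^sub>1 z)\<^sup>2 = F\<^sub>t z * deriv G\<^sub>t z"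
    using transform_primitive_identity[OF B_squared A_nonzero C_nonzero exp_not_eq_zero, of k "u z" z] D\<^sub>1
    by (simp add: DERIV_imp_deriv[OF deriv_G\<^sub>t[OF z]] F\<^sub>t_eq[OF z] F\<^sub>e\<^sub>x\<^sub>t_def F\<^sub>n\<^sub>u\<^sub>m_def
        D\<^sub>1_def D\<^sub>2_def D\<^sub>3_def mult.assoc)
  finally have "(H has_derivative (\<lambda>v. F\<^sub>t z * deriv G\<^sub>t z * v)) (at z)"
    by (simp add: has_field_derivative_def)
  then have "((\<lambda>z. Re (H z)) has_derivative (\<lambda>v. Re (F\<^sub>t z * deriv G\<^sub>t z * v))) (at z)"
    by (rule bounded_linear.has_derivative[OF bounded_linear_Re])
  then show ?thesis by (simp only: H_def h\<^sub>t_eq_Re[abs_def])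
qed

lemma iam_map_\<psi>\<^sub>t: "iam_map U\<^sub>t G\<^sub>t F\<^sub>t \<psi>\<^sub>t"
  unfolding iam_map_def using open_U\<^sub>t holomorphic_G\<^sub>t holomorphic_F\<^sub>t has_derivative_h\<^sub>t
  by (intro conjI exI[of _ h\<^sub>t]) (auto simp: \<psi>\<^sub>t_def)

section \<open>Periodicity and uniqueness of the primitive\<close>

definition "shift j = of_int j * complex_of_real (2 * real m * pi) * \<i>"

lemma b_mult_m: "b * real m = real n"
  using b_rat m by simp

lemma u_shift [simp]: "u (z + shift j) = u z"
proof -
  have "exp (B * shift j) = 1"
    unfolding exp_eq_1 shift_def using b_mult_m
    by (auto intro!: exI[of _ "j * int n"] simp: algebra_simps)
  then show ?thesis by (simp add: u_def distrib_left exp_add)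
qed

lemma exp_shift [simp]: "exp (z + shift j) = exp z"
proof -
  have "exp (shift j) = 1"
    unfolding exp_eq_1 shift_def by (auto intro!: exI[of _ "j * int m"] simp: algebra_simps)
  then show ?thesis by (simp add: exp_add)
qed

lemma Re_shift [simp]: "Re (shift j) = 0"
  by (simp add: shift_def)

lemma D\<^sub>1_shift [simp]: "D\<^sub>1 (z + shift j) = D\<^sub>1 z" and D\<^sub>2_shift [simp]: "D\<^sub>2 (z + shift j) = D\<^sub>2 z"
  by (simp_all add: D\<^sub>1_def D\<^sub>2_def)

lemma U\<^sub>t_shift [simp]: "z + shift j \<in> U\<^sub>t \<longleftrightarrow> z \<in> U\<^sub>t"
  by (simp add: U\<^sub>t_def)

lemma \<psi>\<^sub>t_shift [simp]: "\<psi>\<^sub>t (z + shift j) = \<psi>\<^sub>t z"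
proof -
  have "exp (- (z + shift j)) = exp (- z)"
    using exp_shift[of "- z" "- j"] by (simp add: shift_def algebra_simps)
  then show ?thesis
    using u_shift[of z j] exp_shift[of z j]
    by (simp add: \<psi>\<^sub>t_def G\<^sub>t_def F\<^sub>t_def h\<^sub>t_def u_def)
qed

lemma u_eq_iff:
  assumes "w \<noteq> 0"
  shows "u z = w \<longleftrightarrow> (\<exists>N::int. B * z = Ln w + complex_of_real (2 * pi * of_int N) * \<i>)"
  using assms unfolding u_def by (subst exp_Ln[OF assms, symmetric], subst exp_eq) (auto simp: algebra_simps)

lemma countable_u_fibre: "w \<noteq> 0 \<Longrightarrow> countable {z. u z = w}"
proof -
  assume w: "w \<noteq> 0"
  have "{z. u z = w} \<subseteq> range (\<lambda>N::int. (Ln w + complex_of_real (2 * pi * of_int N) * \<i>) / B)"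
    using B_nonzero by (auto simp: u_eq_iff[OF w] field_simps)
  then show ?thesis by (rule countable_subset) simp
qed

definition "\<zeta>\<^sub>1 = - 1 / k"
definition "\<zeta>\<^sub>2 = - (1 + B) / ((1 - B) * k)"

lemma \<zeta>\<^sub>1_nonzero: "\<zeta>\<^sub>1 \<noteq> 0" and \<zeta>\<^sub>2_nonzero: "\<zeta>\<^sub>2 \<noteq> 0"
  using k one_minus_B_nonzero one_plus_B_nonzero by (auto simp: \<zeta>\<^sub>1_def \<zeta>\<^sub>2_def add_eq_0_iff)

lemma D\<^sub>1_eq_0_iff: "D\<^sub>1 z = 0 \<longleftrightarrow> u z = \<zeta>\<^sub>1"
  using k unfolding D\<^sub>1_def \<zeta>\<^sub>1_def by (auto simp: field_simps add_eq_0_iff)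

lemma D\<^sub>2_eq_0_iff: "D\<^sub>2 z = 0 \<longleftrightarrow> u z = \<zeta>\<^sub>2"
  using k one_minus_B_nonzero unfolding D\<^sub>2_def \<zeta>\<^sub>2_def by (auto simp: field_simps add_eq_0_iff)

lemma D\<^sub>2_at_zero_of_D\<^sub>1: "D\<^sub>1 z = 0 \<Longrightarrow> D\<^sub>2 z = 2 * B"
  unfolding D\<^sub>1_def D\<^sub>2_def by (simp add: add_eq_0_iff mult.assoc)

lemma connected_U\<^sub>t: "connected U\<^sub>t"
proof -
  have "- U\<^sub>t \<subseteq> {z. u z = \<zeta>\<^sub>1} \<union> {z. u z = \<zeta>\<^sub>2}"
    unfolding U\<^sub>t_def using D\<^sub>1_eq_0_iff D\<^sub>2_eq_0_iff by auto
  then have "countable (- U\<^sub>t)"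
    using countable_u_fibre \<zeta>\<^sub>1_nonzero \<zeta>\<^sub>2_nonzero by (meson countable_Un countable_subset)
  then have "connected (UNIV - (- U\<^sub>t))"
    by (intro connected_open_diff_countable) auto
  then show ?thesis by (simp add: Diff_eq)
qed

text \<open>On the connected domain the primitive of \<open>Re (F dG)\<close> is unique up to a constant, so every
  map with these Weierstrass data is a vertical translate of \<open>\<psi>\<^sub>t\<close>.\<close>

lemma iam_map_U\<^sub>t_eq:
  assumes "iam_map U\<^sub>t G\<^sub>t F\<^sub>t \<psi>"
  obtains K where "\<And>z. z \<in> U\<^sub>t \<Longrightarrow> \<psi> z = \<psi>\<^sub>t z - (0, K)"
proof -
  obtain h :: "complex \<Rightarrow> real"
    where h: "\<And>z. z \<in> U\<^sub>t \<Longrightarrow> (h has_derivative (\<lambda>v. Re (F\<^sub>t z * deriv G\<^sub>t z * v))) (at z)"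
      and \<psi>: "\<And>z. z \<in> U\<^sub>t \<Longrightarrow> \<psi> z = (G\<^sub>t z + cnj (F\<^sub>t z),
             (cmod (G\<^sub>t z))\<^sup>2 / 2 - (cmod (F\<^sub>t z))\<^sup>2 / 2 + Re (G\<^sub>t z * F\<^sub>t z) - 2 * h z)"
    using assms unfolding iam_map_def by blast
  define f where "f z = h z - h\<^sub>t z" for z
  have f: "(f has_derivative (\<lambda>v. 0)) (at z)" if "z \<in> U\<^sub>t" for z
    using has_derivative_diff[OF h[OF that] has_derivative_h\<^sub>t[OF that]] unfolding f_def by simp
  have "continuous_on U\<^sub>t f"
    by (rule continuous_at_imp_continuous_on) (use f has_derivative_continuous in blast)
  moreover have "\<forall>z\<in>U\<^sub>t - {}. (f has_derivative (\<lambda>v. 0)) (at z within U\<^sub>t)"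
    using f at_within_open[OF _ open_U\<^sub>t] by simp
  ultimately have "f constant_on U\<^sub>t"
    by (rule has_derivative_zero_connected_constant_on[OF connected_U\<^sub>t open_U\<^sub>t finite.emptyI])
  then obtain K where "\<And>z. z \<in> U\<^sub>t \<Longrightarrow> f z = K"
    unfolding constant_on_def by blast
  then show thesis
    using that[of "2 * K"] \<psi> by (auto simp: \<psi>\<^sub>t_def f_def algebra_simps)
qed

section \<open>The singular set\<close>

text \<open>\<open>|dG\<^sub>t| = |a| X\<^sub>q / Y\<^sub>q\<close> and \<open>|dF\<^sub>t| = |a| Y\<^sub>q / X\<^sub>q\<close>, so the affine metric degenerates
  exactly where \<open>X\<^sub>q = Y\<^sub>q\<close>.\<close>

definition "X\<^sub>q z = exp (Re z) * (cmod (D\<^sub>2 z))\<^sup>2"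
definition "Y\<^sub>q z = 4 * a\<^sup>2 * \<bar>c\<bar> * (cmod (D\<^sub>1 z))\<^sup>2"

lemma norm_deriv_G\<^sub>t:
  assumes "z \<in> U\<^sub>t"
  shows "cmod (deriv G\<^sub>t z) = \<bar>a\<bar> * X\<^sub>q z / Y\<^sub>q z"
proof -
  have "cmod (deriv G\<^sub>t z) = exp (Re z) * (cmod (D\<^sub>2 z))\<^sup>2 / (4 * \<bar>a\<bar> * \<bar>c\<bar> * (cmod (D\<^sub>1 z))\<^sup>2)"
    unfolding DERIV_imp_deriv[OF deriv_G\<^sub>t[OF assms]]
    by (simp add: norm_mult norm_divide norm_power norm_exp_eq_Re)
  also have "\<dots> = \<bar>a\<bar> * X\<^sub>q z / Y\<^sub>q z"
    using a c assms by (simp add: X\<^sub>q_def Y\<^sub>q_def U\<^sub>t_def field_simps power2_eq_square abs_mult_self_eq)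
  finally show ?thesis .
qed

lemma norm_deriv_F\<^sub>t:
  assumes "z \<in> U\<^sub>t"
  shows "cmod (deriv F\<^sub>t z) = \<bar>a\<bar> * Y\<^sub>q z / X\<^sub>q z"
proof -
  have "cmod (deriv F\<^sub>t z) = 4 * \<bar>a\<bar> ^ 3 * \<bar>c\<bar> * (cmod (D\<^sub>1 z))\<^sup>2 / (exp (Re z) * (cmod (D\<^sub>2 z))\<^sup>2)"
    unfolding DERIV_imp_deriv[OF deriv_F\<^sub>t[OF assms]]
    by (simp add: norm_mult norm_divide norm_power norm_exp_eq_Re)
  also have "\<dots> = \<bar>a\<bar> * Y\<^sub>q z / X\<^sub>q z"
    using a c assms
    by (simp add: X\<^sub>q_def Y\<^sub>q_def U\<^sub>t_def field_simps power2_eq_square power3_eq_cube abs_mult_self_eq)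
  finally show ?thesis .
qed

lemma X\<^sub>q_pos: "D\<^sub>2 z \<noteq> 0 \<Longrightarrow> X\<^sub>q z > 0" and Y\<^sub>q_pos: "D\<^sub>1 z \<noteq> 0 \<Longrightarrow> Y\<^sub>q z > 0"
  using a c by (simp_all add: X\<^sub>q_def Y\<^sub>q_def)

lemma in_U\<^sub>t_if_X\<^sub>q_eq_Y\<^sub>q: "X\<^sub>q z = Y\<^sub>q z \<Longrightarrow> z \<in> U\<^sub>t"
  using X\<^sub>q_pos Y\<^sub>q_pos D\<^sub>2_at_zero_of_D\<^sub>1[of z] B_nonzero
  by (fastforce simp: U\<^sub>t_def X\<^sub>q_def Y\<^sub>q_def)

lemma singular_set_U\<^sub>t: "singular_set U\<^sub>t G\<^sub>t F\<^sub>t = {z. X\<^sub>q z = Y\<^sub>q z}"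
proof (intro set_eqI iffI)
  fix z assume "z \<in> singular_set U\<^sub>t G\<^sub>t F\<^sub>t"
  then have z: "z \<in> U\<^sub>t" and "\<bar>a\<bar> * X\<^sub>q z / Y\<^sub>q z = \<bar>a\<bar> * Y\<^sub>q z / X\<^sub>q z"
    by (auto simp: singular_set_def norm_deriv_G\<^sub>t norm_deriv_F\<^sub>t)
  moreover have "X\<^sub>q z > 0" "Y\<^sub>q z > 0" using z X\<^sub>q_pos Y\<^sub>q_pos by (auto simp: U\<^sub>t_def)
  ultimately have "(X\<^sub>q z)\<^sup>2 = (Y\<^sub>q z)\<^sup>2" using a by (simp add: field_simps power2_eq_square)
  with \<open>X\<^sub>q z > 0\<close> \<open>Y\<^sub>q z > 0\<close> show "z \<in> {z. X\<^sub>q z = Y\<^sub>q z}" by (simp add: power2_eq_iff_nonneg)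
qed (auto simp: singular_set_def norm_deriv_G\<^sub>t norm_deriv_F\<^sub>t in_U\<^sub>t_if_X\<^sub>q_eq_Y\<^sub>q)

lemma norm_u: "cmod (u z) = exp (b * Re z)"
  by (simp add: u_def norm_exp_eq_Re)

lemma norm_D\<^sub>1_D\<^sub>2_bounds:
  fixes z :: complex
  defines "s \<equiv> exp (b * Re z)"
  shows "cmod (D\<^sub>2 z) \<le> (1 + b) + \<bar>1 - b\<bar> * cmod k * s"
    and "\<bar>1 - b\<bar> * cmod k * s - (1 + b) \<le> cmod (D\<^sub>2 z)"
    and "cmod (D\<^sub>1 z) \<le> 1 + cmod k * s"
    and "1 - cmod k * s \<le> cmod (D\<^sub>1 z)"
proof -
  have "cmod (1 + B) = 1 + b" "cmod ((1 - B) * k * u z) = \<bar>1 - b\<bar> * cmod k * s"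
    using b_pos unfolding s_def norm_u[symmetric] norm_mult
    by (metis abs_of_pos add_pos_pos norm_of_real of_real_1 of_real_add zero_less_one,
        metis norm_of_real of_real_1 of_real_diff)
  moreover have "cmod (k * u z) = cmod k * s" by (simp add: norm_mult norm_u s_def)
  ultimately show "cmod (D\<^sub>2 z) \<le> (1 + b) + \<bar>1 - b\<bar> * cmod k * s"
    and "\<bar>1 - b\<bar> * cmod k * s - (1 + b) \<le> cmod (D\<^sub>2 z)"
    and "cmod (D\<^sub>1 z) \<le> 1 + cmod k * s"
    and "1 - cmod k * s \<le> cmod (D\<^sub>1 z)"
    unfolding D\<^sub>1_def D\<^sub>2_def
    by (metis norm_triangle_ineq add.assoc, metis add.commute add.assoc norm_diff_ineq,
        metis norm_triangle_ineq norm_one, metis norm_diff_ineq norm_one)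
qed

lemma X\<^sub>q_gt_Y\<^sub>q_right: obtains L where "\<And>z. L \<le> Re z \<Longrightarrow> X\<^sub>q z > Y\<^sub>q z"
proof -
  define \<alpha> \<beta> \<gamma> \<delta> where "\<alpha> = \<bar>1 - b\<bar> * cmod k" and "\<beta> = 1 + b"
    and "\<gamma> = 4 * a\<^sup>2 * \<bar>c\<bar>" and "\<delta> = cmod k"
  have pos: "\<alpha> > 0" "\<beta> > 0" "\<gamma> > 0" "\<delta> > 0" "b > 0"
    unfolding \<alpha>_def \<beta>_def \<gamma>_def \<delta>_def using b_pos b1 k a c by auto
  have "filterlim (\<lambda>x. exp x * (\<alpha> * exp (b * x) - \<beta>)\<^sup>2 - \<gamma> * (1 + \<delta> * exp (b * x))\<^sup>2) at_top at_top"
    "filterlim (\<lambda>x. \<alpha> * exp (b * x) - \<beta>) at_top at_top"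
    using pos by real_asymp+
  then have "eventually (\<lambda>x. 0 < exp x * (\<alpha> * exp (b * x) - \<beta>)\<^sup>2 - \<gamma> * (1 + \<delta> * exp (b * x))\<^sup>2) at_top"
    "eventually (\<lambda>x. 0 < \<alpha> * exp (b * x) - \<beta>) at_top"
    unfolding filterlim_at_top_dense by blast+
  then have "eventually (\<lambda>x. 0 < exp x * (\<alpha> * exp (b * x) - \<beta>)\<^sup>2 - \<gamma> * (1 + \<delta> * exp (b * x))\<^sup>2
                          \<and> 0 < \<alpha> * exp (b * x) - \<beta>) at_top"
    by (rule eventually_conj)
  then obtain L where L: "\<And>x. L \<le> x \<Longrightarrow> 0 < exp x * (\<alpha> * exp (b * x) - \<beta>)\<^sup>2 - \<gamma> * (1 + \<delta> * exp (b * x))\<^sup>2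
                          \<and> 0 < \<alpha> * exp (b * x) - \<beta>"
    unfolding eventually_at_top_linorder by blast
  show thesis
  proof (rule that)
    fix z assume "L \<le> Re z"
    note L = L[OF this] and bounds = norm_D\<^sub>1_D\<^sub>2_bounds[of z, folded \<alpha>_def \<beta>_def \<gamma>_def \<delta>_def]
    have "exp (Re z) * (\<alpha> * exp (b * Re z) - \<beta>)\<^sup>2 \<le> X\<^sub>q z"
      unfolding X\<^sub>q_def using L bounds by (intro mult_left_mono power_mono) auto
    moreover have "Y\<^sub>q z \<le> \<gamma> * (1 + \<delta> * exp (b * Re z))\<^sup>2"
      unfolding Y\<^sub>q_def \<gamma>_def[symmetric] using bounds pos
      by (intro mult_left_mono power_mono) auto
    ultimately show "X\<^sub>q z > Y\<^sub>q z" using L by linarith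
  qed
qed

lemma X\<^sub>q_lt_Y\<^sub>q_left: obtains L where "\<And>z. Re z \<le> L \<Longrightarrow> X\<^sub>q z < Y\<^sub>q z"
proof -
  define \<alpha> \<beta> \<gamma> \<delta> where "\<alpha> = \<bar>1 - b\<bar> * cmod k" and "\<beta> = 1 + b"
    and "\<gamma> = 4 * a\<^sup>2 * \<bar>c\<bar>" and "\<delta> = cmod k"
  have pos: "\<alpha> > 0" "\<beta> > 0" "\<gamma> > 0" "\<delta> > 0" "b > 0"
    unfolding \<alpha>_def \<beta>_def \<gamma>_def \<delta>_def using b_pos b1 k a c by auto
  have "((\<lambda>x. exp x * (\<beta> + \<alpha> * exp (b * x))\<^sup>2 - \<gamma> * (1 - \<delta> * exp (b * x))\<^sup>2) \<longlongrightarrow> - \<gamma>) at_bot"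
    "((\<lambda>x. 1 - \<delta> * exp (b * x)) \<longlongrightarrow> 1) at_bot"
    using pos by real_asymp+
  from order_tendstoD(2)[OF this(1), of 0] order_tendstoD(1)[OF this(2), of 0]
  have "eventually (\<lambda>x. exp x * (\<beta> + \<alpha> * exp (b * x))\<^sup>2 - \<gamma> * (1 - \<delta> * exp (b * x))\<^sup>2 < 0
                          \<and> 0 < 1 - \<delta> * exp (b * x)) at_bot"
    using pos(3) by (auto intro: eventually_conj)
  then obtain L where L: "\<And>x. x \<le> L \<Longrightarrow> exp x * (\<beta> + \<alpha> * exp (b * x))\<^sup>2 - \<gamma> * (1 - \<delta> * exp (b * x))\<^sup>2 < 0
                          \<and> 0 < 1 - \<delta> * exp (b * x)"
    unfolding eventually_at_bot_linorder by blast
  show thesis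
  proof (rule that)
    fix z assume "Re z \<le> L"
    note L = L[OF this] and bounds = norm_D\<^sub>1_D\<^sub>2_bounds[of z, folded \<alpha>_def \<beta>_def \<gamma>_def \<delta>_def]
    have "X\<^sub>q z \<le> exp (Re z) * (\<beta> + \<alpha> * exp (b * Re z))\<^sup>2"
      unfolding X\<^sub>q_def using bounds by (intro mult_left_mono power_mono) auto
    moreover have "\<gamma> * (1 - \<delta> * exp (b * Re z))\<^sup>2 \<le> Y\<^sub>q z"
      unfolding Y\<^sub>q_def \<gamma>_def[symmetric] using L bounds pos
      by (intro mult_left_mono power_mono) auto
    ultimately show "X\<^sub>q z < Y\<^sub>q z" using L by linarith
  qed
qed

lemma singular_set_in_translates_of_compact:
  "\<exists>K. compact K \<and> K \<subseteq> U\<^sub>t \<and> singular_set U\<^sub>t G\<^sub>t F\<^sub>t \<subseteq> (\<Union>j. (\<lambda>z. z + shift j) ` K)"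
proof -
  obtain L\<^sub>1 L\<^sub>2 where L\<^sub>1: "\<And>z. L\<^sub>1 \<le> Re z \<Longrightarrow> X\<^sub>q z > Y\<^sub>q z"
    and L\<^sub>2: "\<And>z. Re z \<le> L\<^sub>2 \<Longrightarrow> X\<^sub>q z < Y\<^sub>q z"
    using X\<^sub>q_gt_Y\<^sub>q_right X\<^sub>q_lt_Y\<^sub>q_left by metis
  define T where "T = 2 * real m * pi"
  have T: "T > 0" using m by (simp add: T_def)
  define K where "K = {z. X\<^sub>q z = Y\<^sub>q z} \<inter> {z. L\<^sub>2 \<le> Re z \<and> Re z \<le> L\<^sub>1 \<and> 0 \<le> Im z \<and> Im z \<le> T}"
  have "closed {z. X\<^sub>q z = Y\<^sub>q z}"
    unfolding X\<^sub>q_def Y\<^sub>q_def D\<^sub>1_def D\<^sub>2_def u_def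
    by (intro closed_Collect_eq continuous_intros)
  moreover have "compact {z. L\<^sub>2 \<le> Re z \<and> Re z \<le> L\<^sub>1 \<and> 0 \<le> Im z \<and> Im z \<le> T}"
    unfolding compact_eq_bounded_closed
  proof
    show "bounded {z. L\<^sub>2 \<le> Re z \<and> Re z \<le> L\<^sub>1 \<and> 0 \<le> Im z \<and> Im z \<le> T}"
      by (rule bounded_subset[OF bounded_cball[of 0 "\<bar>L\<^sub>1\<bar> + \<bar>L\<^sub>2\<bar> + T"]])
         (auto intro!: order.trans[OF cmod_le])
  qed (intro closed_Collect_conj closed_Collect_le continuous_intros)
  ultimately have "compact K" unfolding K_def by (rule closed_Int_compact)
  moreover have "K \<subseteq> U\<^sub>t" unfolding K_def using in_U\<^sub>t_if_X\<^sub>q_eq_Y\<^sub>q by auto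
  moreover have "singular_set U\<^sub>t G\<^sub>t F\<^sub>t \<subseteq> (\<Union>j::int. (\<lambda>z. z + shift j) ` K)"
  proof
    fix z assume "z \<in> singular_set U\<^sub>t G\<^sub>t F\<^sub>t"
    then have q: "X\<^sub>q z = Y\<^sub>q z" by (simp add: singular_set_U\<^sub>t)
    define j where "j = \<lfloor>Im z / T\<rfloor>"
    have "of_int j * T \<le> Im z" "Im z < (of_int j + 1) * T"
      using T floor_divide_lower[OF T, of "Im z"] floor_divide_upper[OF T, of "Im z"] by (auto simp: j_def)
    moreover have "X\<^sub>q (z + shift (- j)) = Y\<^sub>q (z + shift (- j))"
      using q by (simp add: X\<^sub>q_def Y\<^sub>q_def)
    moreover have "L\<^sub>2 < Re z" "Re z < L\<^sub>1" using L\<^sub>1[of z] L\<^sub>2[of z] q by force+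
    ultimately have "z + shift (- j) \<in> K"
      unfolding K_def by (simp add: shift_def T_def algebra_simps)
    moreover have "z = z + shift (- j) + shift j" by (simp add: shift_def)
    ultimately show "z \<in> (\<Union>j::int. (\<lambda>z. z + shift j) ` K)" by blast
  qed
  ultimately show ?thesis by blast
qed

section \<open>The ends\<close>

text \<open>Zeros of \<open>D\<^sub>1\<close> are the poles of \<open>G\<^sub>t\<close> and zeros of \<open>D\<^sub>2\<close> the poles of \<open>F\<^sub>t\<close>; since
  \<open>u\<close> has period \<open>2\<pi>i/b\<close>, each family has exactly \<open>n\<close> members modulo the period \<open>2m\<pi>i\<close>.\<close>

definition "pole_G j = (Ln \<zeta>\<^sub>1 + complex_of_real (2 * pi * real j) * \<i>) / B"
definition "pole_F j = (Ln \<zeta>\<^sub>2 + complex_of_real (2 * pi * real j) * \<i>) / B"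
definition "ends = pole_G ` {..<n} \<union> pole_F ` {..<n}"

lemma u_fibre_point:
  assumes "w \<noteq> 0"
  shows "u ((Ln w + complex_of_real (2 * pi * real j) * \<i>) / B) = w"
  using assms B_nonzero u_eq_iff[OF assms] by (auto intro!: exI[of _ "int j"])

lemma D\<^sub>1_pole_G: "D\<^sub>1 (pole_G j) = 0" and D\<^sub>2_pole_F: "D\<^sub>2 (pole_F j) = 0"
  using u_fibre_point \<zeta>\<^sub>1_nonzero \<zeta>\<^sub>2_nonzero
  by (simp_all add: D\<^sub>1_eq_0_iff D\<^sub>2_eq_0_iff pole_G_def pole_F_def)

lemma D\<^sub>1_pole_F: "D\<^sub>1 (pole_F j) \<noteq> 0"
  using D\<^sub>2_at_zero_of_D\<^sub>1 D\<^sub>2_pole_F B_nonzero by force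

lemma B_mult_shift: "B * shift l = complex_of_real (2 * pi * (real_of_int l * real n)) * \<i>"
  by (simp add: shift_def b_mult_m[symmetric] algebra_simps)

lemma fibre_rep_eq_shift:
  assumes "j < n" "j' < n"
    and eq: "(L + complex_of_real (2 * pi * real j) * \<i>) / B
               = (L + complex_of_real (2 * pi * real j') * \<i>) / B + shift l"
  shows "j = j'" "l = 0"
proof -
  note B_mult_shift[of l]
  moreover have "L + complex_of_real (2 * pi * real j) * \<i>
                   = L + complex_of_real (2 * pi * real j') * \<i> + B * shift l"
  proof -
    have "L + complex_of_real (2 * pi * real j) * \<i> = B * ((L + complex_of_real (2 * pi * real j) * \<i>) / B)"
      using B_nonzero by simp
    also have "\<dots> = B * ((L + complex_of_real (2 * pi * real j') * \<i>) / B) + B * shift l"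
      unfolding eq by (simp only: distrib_left)
    also have "B * ((L + complex_of_real (2 * pi * real j') * \<i>) / B) = L + complex_of_real (2 * pi * real j') * \<i>"
      using B_nonzero by simp
    finally show ?thesis .
  qed
  ultimately have "Im (L + complex_of_real (2 * pi * real j) * \<i>)
      = Im (L + complex_of_real (2 * pi * real j') * \<i> + complex_of_real (2 * pi * (real_of_int l * real n)) * \<i>)"
    by simp
  then have "2 * pi * real j = 2 * pi * real j' + 2 * pi * (real_of_int l * real n)"
    by simp
  then have "(2 * pi) * real j = (2 * pi) * (real j' + real_of_int l * real n)"
    by (simp add: algebra_simps)
  then have "real j = real j' + real_of_int l * real n"
    by (subst (asm) mult_left_cancel) simp_all
  then have "real_of_int (int j) = real_of_int (int j' + l * int n)" by simp
  then have jj': "int j = int j' + l * int n" by (simp only: of_int_eq_iff)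
  then have "l * int n < 1 * int n" "(-1) * int n < l * int n" using assms(1,2) by linarith+
  then have "l < 1" "-1 < l" by (meson mult_right_less_imp_less of_nat_0_le_iff)+
  then have "l = 0" by simp
  with jj' show "j = j'" "l = 0" by simp_all
qed

lemma u_fibre_eq_rep_plus_shift:
  assumes w: "w \<noteq> 0" and "u q = w"
  obtains j l where "j < n" "q = (Ln w + complex_of_real (2 * pi * real j) * \<i>) / B + shift l"
proof -
  obtain N :: int where N: "B * q = Ln w + complex_of_real (2 * pi * of_int N) * \<i>"
    using assms u_eq_iff by blast
  have n: "n > 0" using b_pos b_rat m by (simp add: zero_less_divide_iff)
  define j l where "j = nat (N mod int n)" and "l = N div int n"
  have j: "j < n" using n by (simp add: j_def nat_less_iff)
  have "N = int j + l * int n" using n by (simp add: j_def l_def)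
  then have "complex_of_real (2 * pi * of_int N) * \<i>
      = complex_of_real (2 * pi * real j) * \<i> + complex_of_real (2 * pi * (of_int l * real n)) * \<i>"
    by (simp add: algebra_simps)
  with N have "B * q = (Ln w + complex_of_real (2 * pi * real j) * \<i>) + B * shift l"
    by (simp add: B_mult_shift)
  then have "q = (Ln w + complex_of_real (2 * pi * real j) * \<i>) / B + shift l"
    using B_nonzero by (metis add_divide_distrib nonzero_mult_div_cancel_left)
  with j show thesis by (rule that)
qed

lemma finite_ends: "finite ends"
  by (simp add: ends_def)

lemma inj_on_pole_G: "inj_on pole_G {..<n}" and inj_on_pole_F: "inj_on pole_F {..<n}"
  using fibre_rep_eq_shift[where l = 0] by (auto intro!: inj_onI simp: pole_G_def pole_F_def shift_def)

lemma card_ends: "card ends = 2 * n"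
proof -
  have "pole_G ` {..<n} \<inter> pole_F ` {..<n} = {}"
    using D\<^sub>1_pole_G D\<^sub>1_pole_F by (metis disjoint_iff imageE)
  then have "card ends = card (pole_G ` {..<n}) + card (pole_F ` {..<n})"
    unfolding ends_def by (intro card_Un_disjoint) auto
  then show ?thesis
    using card_image[OF inj_on_pole_G] card_image[OF inj_on_pole_F] by simp
qed

lemma ends_subset: "ends \<subseteq> - U\<^sub>t"
  using D\<^sub>1_pole_G D\<^sub>2_pole_F by (auto simp: ends_def U\<^sub>t_def)

lemma ends_eq_mod_shift:
  assumes "p \<in> ends" "q \<in> ends" "p = q + shift l"
  shows "p = q"
proof -
  have D: "D\<^sub>1 p = D\<^sub>1 q" "D\<^sub>2 p = D\<^sub>2 q" using assms(3) by simp_all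
  have "l = 0"
  proof (cases "p \<in> pole_G ` {..<n}")
    case True
    then obtain j j' where "j < n" "j' < n" "p = pole_G j" "q = pole_G j'"
      using D assms(2) D\<^sub>1_pole_G D\<^sub>1_pole_F by (force simp: ends_def)
    then show ?thesis
      using assms(3) fibre_rep_eq_shift(2)[of j j' "Ln \<zeta>\<^sub>1" l] by (simp add: pole_G_def)
  next
    case False
    then obtain j j' where "j < n" "j' < n" "p = pole_F j" "q = pole_F j'"
      using D assms(1,2) D\<^sub>1_pole_G D\<^sub>1_pole_F by (force simp: ends_def)
    then show ?thesis
      using assms(3) fibre_rep_eq_shift(2)[of j j' "Ln \<zeta>\<^sub>2" l] by (simp add: pole_F_def)
  qed
  then show ?thesis using assms(3) by (simp add: shift_def)
qed

lemma ends_cover: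
  assumes "q \<notin> U\<^sub>t"
  obtains p l where "p \<in> ends" "q = p + shift l"
proof -
  have "u q = \<zeta>\<^sub>1 \<or> u q = \<zeta>\<^sub>2"
    using assms by (simp add: U\<^sub>t_def D\<^sub>1_eq_0_iff D\<^sub>2_eq_0_iff)
  then show thesis
  proof
    assume "u q = \<zeta>\<^sub>1"
    then obtain j l where "j < n" "q = pole_G j + shift l"
      using u_fibre_eq_rep_plus_shift[OF \<zeta>\<^sub>1_nonzero] unfolding pole_G_def by blast
    then show thesis using that[of "pole_G j" l] by (simp add: ends_def)
  next
    assume "u q = \<zeta>\<^sub>2"
    then obtain j l where "j < n" "q = pole_F j + shift l"
      using u_fibre_eq_rep_plus_shift[OF \<zeta>\<^sub>2_nonzero] unfolding pole_F_def by blast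
    then show thesis using that[of "pole_F j" l] by (simp add: ends_def)
  qed
qed

lemma holomorphic_D\<^sub>1: "D\<^sub>1 holomorphic_on S" and holomorphic_D\<^sub>2: "D\<^sub>2 holomorphic_on S"
  and holomorphic_G\<^sub>n\<^sub>u\<^sub>m: "G\<^sub>n\<^sub>u\<^sub>m holomorphic_on S" and holomorphic_F\<^sub>n\<^sub>u\<^sub>m: "F\<^sub>n\<^sub>u\<^sub>m holomorphic_on S"
  unfolding D\<^sub>1_def D\<^sub>2_def D\<^sub>3_def G\<^sub>n\<^sub>u\<^sub>m_def F\<^sub>n\<^sub>u\<^sub>m_def u_def
  by (intro holomorphic_intros; simp add: A_nonzero C_nonzero)+

lemma holomorphic_G\<^sub>e\<^sub>x\<^sub>t: "(\<And>z. z \<in> S \<Longrightarrow> D\<^sub>1 z \<noteq> 0) \<Longrightarrow> G\<^sub>e\<^sub>x\<^sub>t holomorphic_on S"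
  and holomorphic_F\<^sub>e\<^sub>x\<^sub>t: "(\<And>z. z \<in> S \<Longrightarrow> D\<^sub>2 z \<noteq> 0) \<Longrightarrow> F\<^sub>e\<^sub>x\<^sub>t holomorphic_on S"
  unfolding G\<^sub>e\<^sub>x\<^sub>t_def[abs_def] F\<^sub>e\<^sub>x\<^sub>t_def[abs_def]
  by (intro holomorphic_intros holomorphic_D\<^sub>1 holomorphic_D\<^sub>2 holomorphic_G\<^sub>n\<^sub>u\<^sub>m holomorphic_F\<^sub>n\<^sub>u\<^sub>m; simp)+

lemma u_eq_imp_eq_near:
  assumes "u z = u p" and "dist z p < 2 * pi / b"
  shows "z = p"
proof -
  obtain N :: int where N: "B * z = B * p + complex_of_real (real_of_int (2 * N) * pi) * \<i>"
    using assms(1) unfolding u_def exp_eq by blast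
  then have "B * (z - p) = complex_of_real (real_of_int (2 * N) * pi) * \<i>"
    by (simp add: algebra_simps)
  then have "cmod (B * (z - p)) = \<bar>real_of_int (2 * N) * pi\<bar>"
    by (simp only: norm_mult norm_of_real norm_ii mult_1_right)
  then have "b * dist z p = 2 * \<bar>real_of_int N\<bar> * pi"
    using b_pos by (simp add: norm_mult dist_norm abs_mult)
  moreover have "b * dist z p < 2 * pi" using assms(2) b_pos by (simp add: field_simps)
  ultimately have "N = 0" by simp
  then show "z = p" using N B_nonzero by simp
qed

lemma radius_at_zero_of_D\<^sub>1:
  assumes p: "D\<^sub>1 p = 0"
  obtains r where "r > 0" "ball p r - {p} \<subseteq> U\<^sub>t" "\<And>z. z \<in> ball p r \<Longrightarrow> D\<^sub>2 z \<noteq> 0 \<and> G\<^sub>n\<^sub>u\<^sub>m z \<noteq> 0"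
proof -
  have "k * u p = - 1" using p by (simp add: D\<^sub>1_def add_eq_0_iff)
  then have "(1 + B)\<^sup>2 + (1 - B)\<^sup>2 * k * u p = (1 + B)\<^sup>2 - (1 - B)\<^sup>2"
    by (simp add: mult.assoc)
  also have "\<dots> = 4 * B" by (simp add: power2_eq_square algebra_simps)
  finally have "(1 + B)\<^sup>2 + (1 - B)\<^sup>2 * k * u p = 4 * B" .
  then have nz: "D\<^sub>2 p * G\<^sub>n\<^sub>u\<^sub>m p \<noteq> 0"
    using D\<^sub>2_at_zero_of_D\<^sub>1[OF p] A_nonzero B_nonzero C_nonzero by (simp add: G\<^sub>n\<^sub>u\<^sub>m_def)
  have "continuous_on UNIV (\<lambda>z. D\<^sub>2 z * G\<^sub>n\<^sub>u\<^sub>m z)"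
    by (intro holomorphic_on_imp_continuous_on holomorphic_intros holomorphic_D\<^sub>2 holomorphic_G\<^sub>n\<^sub>u\<^sub>m)
  then obtain r where r: "r > 0" "\<And>z. z \<in> ball p r \<Longrightarrow> D\<^sub>2 z * G\<^sub>n\<^sub>u\<^sub>m z \<noteq> 0"
    using nz by (rule nonzero_on_ball_if_continuous) blast
  show thesis
  proof (rule that[of "min r (2 * pi / b)"])
    show "ball p (min r (2 * pi / b)) - {p} \<subseteq> U\<^sub>t"
      using r u_eq_imp_eq_near p by (force simp: U\<^sub>t_def D\<^sub>1_eq_0_iff dist_commute)
  qed (use r b_pos in auto)
qed

lemma radius_at_zero_of_D\<^sub>2:
  assumes q: "D\<^sub>2 q = 0"
  obtains r where "r > 0" "ball q r - {q} \<subseteq> U\<^sub>t" "\<And>z. z \<in> ball q r \<Longrightarrow> D\<^sub>1 z \<noteq> 0 \<and> F\<^sub>n\<^sub>u\<^sub>m z \<noteq> 0"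
proof -
  have kuq: "(1 - B) * (k * u q) = - (1 + B)"
    using q by (simp add: D\<^sub>2_def add_eq_0_iff mult.assoc)
  have "(1 - B) * D\<^sub>3 q = (1 - B)\<^sup>2 + (1 + B) * ((1 - B) * (k * u q))"
    unfolding D\<^sub>3_def by (simp add: algebra_simps power2_eq_square)
  also have "\<dots> = - 4 * B"
    unfolding kuq by (simp add: algebra_simps power2_eq_square)
  finally have "(1 - B) * D\<^sub>3 q = - 4 * B" .
  then have nz: "D\<^sub>1 q * F\<^sub>n\<^sub>u\<^sub>m q \<noteq> 0"
    using q D\<^sub>2_at_zero_of_D\<^sub>1 A_nonzero B_nonzero by (auto simp: F\<^sub>n\<^sub>u\<^sub>m_def)
  have "continuous_on UNIV (\<lambda>z. D\<^sub>1 z * F\<^sub>n\<^sub>u\<^sub>m z)"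
    by (intro holomorphic_on_imp_continuous_on holomorphic_intros holomorphic_D\<^sub>1 holomorphic_F\<^sub>n\<^sub>u\<^sub>m)
  then obtain r where r: "r > 0" "\<And>z. z \<in> ball q r \<Longrightarrow> D\<^sub>1 z * F\<^sub>n\<^sub>u\<^sub>m z \<noteq> 0"
    using nz by (rule nonzero_on_ball_if_continuous) blast
  show thesis
  proof (rule that[of "min r (2 * pi / b)"])
    show "ball q (min r (2 * pi / b)) - {q} \<subseteq> U\<^sub>t"
      using r u_eq_imp_eq_near q by (force simp: U\<^sub>t_def D\<^sub>2_eq_0_iff dist_commute)
  qed (use r b_pos in auto)
qed

lemma G\<^sub>n\<^sub>u\<^sub>m_at_zero_of_D\<^sub>1:
  assumes "D\<^sub>1 p = 0"
  shows "G\<^sub>n\<^sub>u\<^sub>m p = exp p * B / (A * C)"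
proof -
  have "k * u p = - 1" using assms by (simp add: D\<^sub>1_def add_eq_0_iff)
  then have "(1 + B)\<^sup>2 + (1 - B)\<^sup>2 * k * u p = (1 + B)\<^sup>2 - (1 - B)\<^sup>2"
    by (simp add: mult.assoc)
  also have "\<dots> = 4 * B" by (simp add: power2_eq_square algebra_simps)
  finally show ?thesis using A_nonzero C_nonzero by (simp add: G\<^sub>n\<^sub>u\<^sub>m_def field_simps)
qed

lemma F\<^sub>e\<^sub>x\<^sub>t_at_zero_of_D\<^sub>1:
  assumes "D\<^sub>1 p = 0"
  shows "F\<^sub>e\<^sub>x\<^sub>t p = - A / exp p"
proof -
  have "k * u p = - 1" using assms by (simp add: D\<^sub>1_def add_eq_0_iff)
  moreover have "D\<^sub>3 p = (1 - B) + (1 + B) * (k * u p)" by (simp add: D\<^sub>3_def mult.assoc)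
  ultimately have "D\<^sub>3 p = - 2 * B" by (simp add: algebra_simps)
  then show ?thesis
    using D\<^sub>2_at_zero_of_D\<^sub>1[OF assms] B_nonzero by (simp add: F\<^sub>e\<^sub>x\<^sub>t_def F\<^sub>n\<^sub>u\<^sub>m_def field_simps)
qed

text \<open>Near a pole \<open>p\<close> of \<open>G\<^sub>t\<close> the height differs from \<open>|X - 2 cnj F\<^sub>t(p)|\<^sup>2/2\<close> by a
  convergent term: \<open>h\<^sub>t - Re (G\<^sub>t F\<^sub>t(p))\<close> is a quotient of two functions with simple zeros at \<open>p\<close>.\<close>

lemma height_limit_at_zero_of_D\<^sub>1:
  assumes p: "D\<^sub>1 p = 0"
  obtains L where "((\<lambda>z. h\<^sub>t z - Re (G\<^sub>t z * F\<^sub>e\<^sub>x\<^sub>t p)) \<longlongrightarrow> L) (at p)"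
proof -
  obtain r where r: "r > 0" "ball p r - {p} \<subseteq> U\<^sub>t"
    by (rule radius_at_zero_of_D\<^sub>1[OF p])
  define N where "N z = - (A\<^sup>2) * z * D\<^sub>1 z - B / C - G\<^sub>n\<^sub>u\<^sub>m z * F\<^sub>e\<^sub>x\<^sub>t p" for z
  have "N p = 0"
    using A_nonzero C_nonzero
    by (simp add: N_def p G\<^sub>n\<^sub>u\<^sub>m_at_zero_of_D\<^sub>1[OF p] F\<^sub>e\<^sub>x\<^sub>t_at_zero_of_D\<^sub>1[OF p] field_simps)
  moreover have "N holomorphic_on UNIV"
    unfolding N_def by (intro holomorphic_intros holomorphic_D\<^sub>1 holomorphic_G\<^sub>n\<^sub>u\<^sub>m)
  then obtain N' where "(N has_field_derivative N') (at p)"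
    by (auto simp: holomorphic_on_open)
  moreover have "k * (B * u p) \<noteq> 0"
    using k B_nonzero by (simp add: u_def)
  ultimately have lim: "((\<lambda>z. Re (N z / D\<^sub>1 z)) \<longlongrightarrow> Re (N' / (k * (B * u p)))) (at p)"
    by (intro tendsto_Re tendsto_quotient_at_simple_zero has_field_derivative_D\<^sub>1 p)
  have "eventually (\<lambda>z. z \<in> ball p r - {p}) (at p)"
    using r by (intro eventually_at_in_open) auto
  then have "eventually (\<lambda>z. Re (N z / D\<^sub>1 z) = h\<^sub>t z - Re (G\<^sub>t z * F\<^sub>e\<^sub>x\<^sub>t p)) (at p)"
  proof eventually_elim
    case (elim z)
    then have "D\<^sub>1 z \<noteq> 0" "z \<in> U\<^sub>t" using r by (auto simp: U\<^sub>t_def)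
    then have "N z / D\<^sub>1 z = - (A\<^sup>2) * z - (B / C) * (1 / D\<^sub>1 z) - G\<^sub>t z * F\<^sub>e\<^sub>x\<^sub>t p"
      by (simp add: N_def G\<^sub>t_eq G\<^sub>e\<^sub>x\<^sub>t_def field_simps)
    then show ?case by (simp add: h\<^sub>t_eq_Re)
  qed
  with lim show thesis
    by (intro that) (rule Lim_transform_eventually)
qed

lemma height_limit_at_zero_of_D\<^sub>2:
  assumes q: "D\<^sub>2 q = 0"
  obtains L where "((\<lambda>z. Re (F\<^sub>t z * (G\<^sub>t z - G\<^sub>e\<^sub>x\<^sub>t q))) \<longlongrightarrow> L) (at q)"
proof -
  obtain r where r: "r > 0" "ball q r - {q} \<subseteq> U\<^sub>t" and D\<^sub>1: "\<And>z. z \<in> ball q r \<Longrightarrow> D\<^sub>1 z \<noteq> 0 \<and> F\<^sub>n\<^sub>u\<^sub>m z \<noteq> 0"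
    by (rule radius_at_zero_of_D\<^sub>2[OF q]) blast
  define N where "N z = F\<^sub>n\<^sub>u\<^sub>m z * (G\<^sub>e\<^sub>x\<^sub>t z - G\<^sub>e\<^sub>x\<^sub>t q)" for z
  have "N q = 0" by (simp add: N_def)
  moreover have "N holomorphic_on ball q r"
    unfolding N_def using D\<^sub>1
    by (intro holomorphic_intros holomorphic_F\<^sub>n\<^sub>u\<^sub>m holomorphic_G\<^sub>e\<^sub>x\<^sub>t) auto
  then obtain N' where "(N has_field_derivative N') (at q)"
    using r(1) centre_in_ball by (metis holomorphic_on_open open_ball)
  moreover have "(1 - B) * k * (B * u q) \<noteq> 0"
    using k B_nonzero one_minus_B_nonzero by (simp add: u_def)
  ultimately have lim: "((\<lambda>z. Re (N z / D\<^sub>2 z)) \<longlongrightarrow> Re (N' / ((1 - B) * k * (B * u q)))) (at q)"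
    by (intro tendsto_Re tendsto_quotient_at_simple_zero has_field_derivative_D\<^sub>2 q)
  have "eventually (\<lambda>z. z \<in> ball q r - {q}) (at q)"
    using r by (intro eventually_at_in_open) auto
  then have "eventually (\<lambda>z. Re (N z / D\<^sub>2 z) = Re (F\<^sub>t z * (G\<^sub>t z - G\<^sub>e\<^sub>x\<^sub>t q))) (at q)"
  proof eventually_elim
    case (elim z)
    then have "z \<in> U\<^sub>t" using r by auto
    then show ?case by (simp add: N_def G\<^sub>t_eq F\<^sub>t_eq F\<^sub>e\<^sub>x\<^sub>t_def)
  qed
  with lim show thesis
    by (intro that) (rule Lim_transform_eventually)
qed

lemma snd_\<psi>_eq:
  assumes "\<And>z. z \<in> U\<^sub>t \<Longrightarrow> \<psi> z = \<psi>\<^sub>t z - (0, K)" and "z \<in> U\<^sub>t"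
  shows "snd (\<psi> z) = (cmod (G\<^sub>t z))\<^sup>2 / 2 - (cmod (F\<^sub>t z))\<^sup>2 / 2 + Re (G\<^sub>t z * F\<^sub>t z) - 2 * h\<^sub>t z - K"
  using assms by (simp add: \<psi>\<^sub>t_def)

lemma chart_at_zero_of_D\<^sub>1:
  assumes p: "D\<^sub>1 p = 0"
  obtains \<rho> where "\<rho> > 0" "ball p \<rho> - {p} \<subseteq> U\<^sub>t"
    "inj_on (\<lambda>z. G\<^sub>t z + cnj (F\<^sub>t z)) (ball p \<rho> - {p})"
    "filterlim G\<^sub>t at_infinity (at p)" "(F\<^sub>t \<longlongrightarrow> F\<^sub>e\<^sub>x\<^sub>t p) (at p)"
proof -
  obtain r where r: "r > 0" "ball p r - {p} \<subseteq> U\<^sub>t"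
    and nz: "\<And>z. z \<in> ball p r \<Longrightarrow> D\<^sub>2 z \<noteq> 0 \<and> G\<^sub>n\<^sub>u\<^sub>m z \<noteq> 0"
    by (rule radius_at_zero_of_D\<^sub>1[OF p]) blast
  have holF: "F\<^sub>e\<^sub>x\<^sub>t holomorphic_on ball p r" using nz by (intro holomorphic_F\<^sub>e\<^sub>x\<^sub>t) auto
  have d: "deriv D\<^sub>1 p \<noteq> 0"
    using DERIV_imp_deriv[OF has_field_derivative_D\<^sub>1] k B_nonzero by (simp add: u_def)
  obtain \<rho> where \<rho>: "\<rho> > 0" "\<rho> \<le> r" and "\<And>z. z \<in> ball p \<rho> - {p} \<Longrightarrow> D\<^sub>1 z \<noteq> 0"
    and inj: "inj_on (\<lambda>z. G\<^sub>n\<^sub>u\<^sub>m z / D\<^sub>1 z + cnj (F\<^sub>e\<^sub>x\<^sub>t z)) (ball p \<rho> - {p})"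
    and Ginf: "filterlim (\<lambda>z. G\<^sub>n\<^sub>u\<^sub>m z / D\<^sub>1 z) at_infinity (at p)"
    by (rule simple_pole_chart[OF r(1) holomorphic_G\<^sub>n\<^sub>u\<^sub>m holomorphic_D\<^sub>1 holF _ p d]) (use nz in auto)
  have SU: "ball p \<rho> - {p} \<subseteq> U\<^sub>t" using r(2) \<rho>(2) by force
  have evS: "eventually (\<lambda>z. z \<in> ball p \<rho> - {p}) (at p)"
    using \<rho> by (intro eventually_at_in_open) auto
  have GF: "G\<^sub>t z = G\<^sub>n\<^sub>u\<^sub>m z / D\<^sub>1 z" "F\<^sub>t z = F\<^sub>e\<^sub>x\<^sub>t z" if "z \<in> ball p \<rho> - {p}" for z
    using SU that G\<^sub>t_eq F\<^sub>t_eq by (auto simp: G\<^sub>e\<^sub>x\<^sub>t_def)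
  show thesis
  proof (rule that[OF \<rho>(1) SU])
    show "inj_on (\<lambda>z. G\<^sub>t z + cnj (F\<^sub>t z)) (ball p \<rho> - {p})"
      using inj by (rule inj_on_cong[THEN iffD2, rotated]) (simp add: GF)
    show "filterlim G\<^sub>t at_infinity (at p)"
      using Ginf by (rule filterlim_cong[THEN iffD1, rotated 3]) (use evS in \<open>auto elim!: eventually_mono simp: GF\<close>)
    have "isCont F\<^sub>e\<^sub>x\<^sub>t p"
      using continuous_on_interior[OF holomorphic_on_imp_continuous_on[OF holF]] r(1) by simp
    then show "(F\<^sub>t \<longlongrightarrow> F\<^sub>e\<^sub>x\<^sub>t p) (at p)"
      unfolding isCont_def
      by (rule Lim_transform_eventually) (use evS in \<open>auto elim!: eventually_mono simp: GF\<close>)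
  qed
qed

lemma end_at_zero_of_D\<^sub>1:
  assumes p: "D\<^sub>1 p = 0" and \<psi>: "\<And>z. z \<in> U\<^sub>t \<Longrightarrow> \<psi> z = \<psi>\<^sub>t z - (0, K)"
  shows "complete_end U\<^sub>t G\<^sub>t F\<^sub>t p \<and> embedded_end U\<^sub>t \<psi> p \<and> end_revolution_type U\<^sub>t \<psi> p"
proof -
  define F\<^sub>0 where "F\<^sub>0 = F\<^sub>e\<^sub>x\<^sub>t p"
  obtain \<rho> where \<rho>: "\<rho> > 0" and SU: "ball p \<rho> - {p} \<subseteq> U\<^sub>t"
    and inj: "inj_on (\<lambda>z. G\<^sub>t z + cnj (F\<^sub>t z)) (ball p \<rho> - {p})"
    and Ginf: "filterlim G\<^sub>t at_infinity (at p)" and Flim: "(F\<^sub>t \<longlongrightarrow> F\<^sub>0) (at p)"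
    unfolding F\<^sub>0_def by (rule chart_at_zero_of_D\<^sub>1[OF p])
  obtain L where L: "((\<lambda>z. h\<^sub>t z - Re (G\<^sub>t z * F\<^sub>0)) \<longlongrightarrow> L) (at p)"
    unfolding F\<^sub>0_def by (rule height_limit_at_zero_of_D\<^sub>1[OF p])
  have "((\<lambda>z. - (cmod (F\<^sub>t z))\<^sup>2 - 2 * (h\<^sub>t z - Re (G\<^sub>t z * F\<^sub>0)) - K + 2 * Re (cnj (F\<^sub>t z) * F\<^sub>0)
               - 2 * (cmod F\<^sub>0)\<^sup>2)
        \<longlongrightarrow> - (cmod F\<^sub>0)\<^sup>2 - 2 * L - K + 2 * Re (cnj F\<^sub>0 * F\<^sub>0) - 2 * (cmod F\<^sub>0)\<^sup>2) (at p)"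
    by (intro tendsto_intros Flim L)
  moreover have "eventually (\<lambda>z. z \<in> ball p \<rho> - {p}) (at p)"
    using \<rho> by (intro eventually_at_in_open) auto
  then have "eventually (\<lambda>z. - (cmod (F\<^sub>t z))\<^sup>2 - 2 * (h\<^sub>t z - Re (G\<^sub>t z * F\<^sub>0)) - K
      + 2 * Re (cnj (F\<^sub>t z) * F\<^sub>0) - 2 * (cmod F\<^sub>0)\<^sup>2
      = snd (\<psi> z) - 1 * (cmod (G\<^sub>t z + cnj (F\<^sub>t z) - 2 * cnj F\<^sub>0))\<^sup>2 / 2) (at p)"
  proof eventually_elim
    case (elim z)
    then have "z \<in> U\<^sub>t" using SU by auto
    then show ?case
      using height_identity_pole_G[of "G\<^sub>t z" "F\<^sub>t z" "h\<^sub>t z" K F\<^sub>0] by (simp add: snd_\<psi>_eq[OF \<psi>])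
  qed
  ultimately have lim: "((\<lambda>z. snd (\<psi> z) - 1 * (cmod (G\<^sub>t z + cnj (F\<^sub>t z) - 2 * cnj F\<^sub>0))\<^sup>2 / 2)
        \<longlongrightarrow> - (cmod F\<^sub>0)\<^sup>2 - 2 * L - K + 2 * Re (cnj F\<^sub>0 * F\<^sub>0) - 2 * (cmod F\<^sub>0)\<^sup>2) (at p)"
    by (rule Lim_transform_eventually)
  have "\<forall>z\<in>ball p \<rho> - {p}. fst (\<psi> z) = G\<^sub>t z + cnj (F\<^sub>t z)"
    using SU \<psi> by (auto simp: \<psi>\<^sub>t_def)
  from end_properties_at_pole[OF \<rho> SU holomorphic_G\<^sub>t holomorphic_F\<^sub>t disjI1[OF Ginf] inj
      tendsto_add_filterlim_at_infinity'[OF Ginf tendsto_cnj[OF Flim]] this _ lim]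
  show ?thesis by simp
qed

lemma chart_at_zero_of_D\<^sub>2:
  assumes q: "D\<^sub>2 q = 0"
  obtains \<rho> where "\<rho> > 0" "ball q \<rho> - {q} \<subseteq> U\<^sub>t"
    "inj_on (\<lambda>z. G\<^sub>t z + cnj (F\<^sub>t z)) (ball q \<rho> - {q})"
    "filterlim F\<^sub>t at_infinity (at q)" "(G\<^sub>t \<longlongrightarrow> G\<^sub>e\<^sub>x\<^sub>t q) (at q)"
proof -
  obtain r where r: "r > 0" "ball q r - {q} \<subseteq> U\<^sub>t"
    and nz: "\<And>z. z \<in> ball q r \<Longrightarrow> D\<^sub>1 z \<noteq> 0 \<and> F\<^sub>n\<^sub>u\<^sub>m z \<noteq> 0"
    by (rule radius_at_zero_of_D\<^sub>2[OF q]) blast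
  have holG: "G\<^sub>e\<^sub>x\<^sub>t holomorphic_on ball q r" using nz by (intro holomorphic_G\<^sub>e\<^sub>x\<^sub>t) auto
  have d: "deriv D\<^sub>2 q \<noteq> 0"
    using DERIV_imp_deriv[OF has_field_derivative_D\<^sub>2] k B_nonzero one_minus_B_nonzero
    by (simp add: u_def)
  obtain \<rho> where \<rho>: "\<rho> > 0" "\<rho> \<le> r" and "\<And>z. z \<in> ball q \<rho> - {q} \<Longrightarrow> D\<^sub>2 z \<noteq> 0"
    and inj: "inj_on (\<lambda>z. F\<^sub>n\<^sub>u\<^sub>m z / D\<^sub>2 z + cnj (G\<^sub>e\<^sub>x\<^sub>t z)) (ball q \<rho> - {q})"
    and Finf: "filterlim (\<lambda>z. F\<^sub>n\<^sub>u\<^sub>m z / D\<^sub>2 z) at_infinity (at q)"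
    by (rule simple_pole_chart[OF r(1) holomorphic_F\<^sub>n\<^sub>u\<^sub>m holomorphic_D\<^sub>2 holG _ q d]) (use nz in auto)
  have SU: "ball q \<rho> - {q} \<subseteq> U\<^sub>t" using r(2) \<rho>(2) by force
  have evS: "eventually (\<lambda>z. z \<in> ball q \<rho> - {q}) (at q)"
    using \<rho> by (intro eventually_at_in_open) auto
  have GF: "G\<^sub>t z = G\<^sub>e\<^sub>x\<^sub>t z" "F\<^sub>t z = F\<^sub>n\<^sub>u\<^sub>m z / D\<^sub>2 z" if "z \<in> ball q \<rho> - {q}" for z
    using SU that G\<^sub>t_eq F\<^sub>t_eq by (auto simp: F\<^sub>e\<^sub>x\<^sub>t_def)
  show thesis
  proof (rule that[OF \<rho>(1) SU])
    have "inj_on (\<lambda>z. cnj (F\<^sub>n\<^sub>u\<^sub>m z / D\<^sub>2 z + cnj (G\<^sub>e\<^sub>x\<^sub>t z))) (ball q \<rho> - {q})"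
      using inj by (simp only: inj_on_def complex_cnj_cancel_iff)
    then show "inj_on (\<lambda>z. G\<^sub>t z + cnj (F\<^sub>t z)) (ball q \<rho> - {q})"
      by (rule inj_on_cong[THEN iffD1, rotated]) (simp add: GF add.commute)
    show "filterlim F\<^sub>t at_infinity (at q)"
      using Finf by (rule filterlim_cong[THEN iffD1, rotated 3]) (use evS in \<open>auto elim!: eventually_mono simp: GF\<close>)
    have "isCont G\<^sub>e\<^sub>x\<^sub>t q"
      using continuous_on_interior[OF holomorphic_on_imp_continuous_on[OF holG]] r(1) by simp
    then show "(G\<^sub>t \<longlongrightarrow> G\<^sub>e\<^sub>x\<^sub>t q) (at q)"
      unfolding isCont_def
      by (rule Lim_transform_eventually) (use evS in \<open>auto elim!: eventually_mono simp: GF\<close>)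
  qed
qed

text \<open>At a pole of \<open>F\<^sub>t\<close> the height tends to \<open>-\<infinity>\<close> (\<open>h\<^sub>t\<close> stays bounded since \<open>D\<^sub>1 \<noteq> 0\<close>),
  so the model is the end at \<open>0\<close> of the rotational map.\<close>

lemma end_at_zero_of_D\<^sub>2:
  assumes q: "D\<^sub>2 q = 0" and \<psi>: "\<And>z. z \<in> U\<^sub>t \<Longrightarrow> \<psi> z = \<psi>\<^sub>t z - (0, K)"
  shows "complete_end U\<^sub>t G\<^sub>t F\<^sub>t q \<and> embedded_end U\<^sub>t \<psi> q \<and> end_revolution_type U\<^sub>t \<psi> q"
proof -
  define G\<^sub>0 where "G\<^sub>0 = G\<^sub>e\<^sub>x\<^sub>t q"
  obtain \<rho> where \<rho>: "\<rho> > 0" and SU: "ball q \<rho> - {q} \<subseteq> U\<^sub>t"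
    and inj: "inj_on (\<lambda>z. G\<^sub>t z + cnj (F\<^sub>t z)) (ball q \<rho> - {q})"
    and Finf: "filterlim F\<^sub>t at_infinity (at q)" and Glim: "(G\<^sub>t \<longlongrightarrow> G\<^sub>0) (at q)"
    unfolding G\<^sub>0_def by (rule chart_at_zero_of_D\<^sub>2[OF q])
  obtain L where L: "((\<lambda>z. Re (F\<^sub>t z * (G\<^sub>t z - G\<^sub>0))) \<longlongrightarrow> L) (at q)"
    unfolding G\<^sub>0_def by (rule height_limit_at_zero_of_D\<^sub>2[OF q])
  have "D\<^sub>1 q \<noteq> 0" using q D\<^sub>2_at_zero_of_D\<^sub>1 B_nonzero by force
  then have "isCont (\<lambda>z. - (A\<^sup>2) * z - (B / C) * (1 / D\<^sub>1 z)) q"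
    unfolding D\<^sub>1_def u_def by (intro continuous_intros) auto
  then have "isCont h\<^sub>t q"
    unfolding h\<^sub>t_eq_Re[abs_def] by (rule isCont_Re)
  then have "((\<lambda>z. (cmod (G\<^sub>t z))\<^sup>2 - 2 * Re (G\<^sub>t z * cnj G\<^sub>0) + 2 * (cmod G\<^sub>0)\<^sup>2
               + 2 * Re (F\<^sub>t z * (G\<^sub>t z - G\<^sub>0)) - 2 * h\<^sub>t z - K)
        \<longlongrightarrow> (cmod G\<^sub>0)\<^sup>2 - 2 * Re (G\<^sub>0 * cnj G\<^sub>0) + 2 * (cmod G\<^sub>0)\<^sup>2 + 2 * L - 2 * h\<^sub>t q - K) (at q)"
    unfolding isCont_def by (intro tendsto_intros Glim L)
  moreover have "eventually (\<lambda>z. z \<in> ball q \<rho> - {q}) (at q)"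
    using \<rho> by (intro eventually_at_in_open) auto
  then have "eventually (\<lambda>z. (cmod (G\<^sub>t z))\<^sup>2 - 2 * Re (G\<^sub>t z * cnj G\<^sub>0) + 2 * (cmod G\<^sub>0)\<^sup>2
      + 2 * Re (F\<^sub>t z * (G\<^sub>t z - G\<^sub>0)) - 2 * h\<^sub>t z - K
      = snd (\<psi> z) - (-1) * (cmod (G\<^sub>t z + cnj (F\<^sub>t z) - 2 * G\<^sub>0))\<^sup>2 / 2) (at q)"
  proof eventually_elim
    case (elim z)
    then have "z \<in> U\<^sub>t" using SU by auto
    then show ?case
      using height_identity_pole_F[of "G\<^sub>t z" "F\<^sub>t z" "h\<^sub>t z" K G\<^sub>0] by (simp add: snd_\<psi>_eq[OF \<psi>])
  qed
  ultimately have lim: "((\<lambda>z. snd (\<psi> z) - (-1) * (cmod (G\<^sub>t z + cnj (F\<^sub>t z) - 2 * G\<^sub>0))\<^sup>2 / 2)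
        \<longlongrightarrow> (cmod G\<^sub>0)\<^sup>2 - 2 * Re (G\<^sub>0 * cnj G\<^sub>0) + 2 * (cmod G\<^sub>0)\<^sup>2 + 2 * L - 2 * h\<^sub>t q - K) (at q)"
    by (rule Lim_transform_eventually)
  have "filterlim (\<lambda>z. cnj (F\<^sub>t z)) at_infinity (at q)"
    using filterlim_at_infinity_imp_norm_at_top[OF Finf]
    by (intro filterlim_norm_at_top_imp_at_infinity) simp
  then have Xinf: "filterlim (\<lambda>z. G\<^sub>t z + cnj (F\<^sub>t z)) at_infinity (at q)"
    by (rule tendsto_add_filterlim_at_infinity[OF Glim])
  have "\<forall>z\<in>ball q \<rho> - {q}. fst (\<psi> z) = G\<^sub>t z + cnj (F\<^sub>t z)"
    using SU \<psi> by (auto simp: \<psi>\<^sub>t_def)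
  from end_properties_at_pole[OF \<rho> SU holomorphic_G\<^sub>t holomorphic_F\<^sub>t disjI2[OF Finf] inj Xinf this _ lim]
  show ?thesis by simp
qed

lemma periodic_iam_map_U\<^sub>t:
  assumes "iam_map U\<^sub>t G\<^sub>t F\<^sub>t \<psi>" and "z \<in> U\<^sub>t"
  shows "z + shift j \<in> U\<^sub>t \<and> \<psi> (z + shift j) = \<psi> z"
proof -
  obtain K where "\<And>z. z \<in> U\<^sub>t \<Longrightarrow> \<psi> z = \<psi>\<^sub>t z - (0, K)"
    by (rule iam_map_U\<^sub>t_eq[OF assms(1)]) blast
  then show ?thesis using assms(2) by simp
qed

lemma ends_of_iam_map_U\<^sub>t:
  assumes "iam_map U\<^sub>t G\<^sub>t F\<^sub>t \<psi>"
  shows "\<exists>E. finite E \<and> card E = 2 * n \<and> E \<subseteq> - U\<^sub>t \<and>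
    (\<forall>p\<in>E. \<forall>q\<in>E. \<forall>j. p = q + shift j \<longrightarrow> p = q) \<and> (\<forall>q\<in>- U\<^sub>t. \<exists>p\<in>E. \<exists>j. q = p + shift j) \<and>
    (\<forall>p\<in>E. complete_end U\<^sub>t G\<^sub>t F\<^sub>t p \<and> embedded_end U\<^sub>t \<psi> p \<and> end_revolution_type U\<^sub>t \<psi> p)"
proof -
  obtain K where \<psi>: "\<And>z. z \<in> U\<^sub>t \<Longrightarrow> \<psi> z = \<psi>\<^sub>t z - (0, K)"
    by (rule iam_map_U\<^sub>t_eq[OF assms]) blast
  have "complete_end U\<^sub>t G\<^sub>t F\<^sub>t p \<and> embedded_end U\<^sub>t \<psi> p \<and> end_revolution_type U\<^sub>t \<psi> p"
    if "p \<in> ends" for p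
    using that end_at_zero_of_D\<^sub>1[OF _ \<psi>] end_at_zero_of_D\<^sub>2[OF _ \<psi>] D\<^sub>1_pole_G D\<^sub>2_pole_F
    by (auto simp: ends_def)
  moreover have "\<exists>p\<in>ends. \<exists>j. q = p + shift j" if "q \<notin> U\<^sub>t" for q
    using ends_cover[OF that] by blast
  ultimately show ?thesis
    using finite_ends card_ends ends_subset ends_eq_mod_shift by (intro exI[of _ ends]) blast
qed

end

theorem mainTheorem4:
  fixes a c b :: real and k :: complex and n m :: nat
    and G F R Gt Ft :: "complex \<Rightarrow> complex" and U :: "complex set"
  assumes a: "a \<noteq> 0" and c: "c \<noteq> 0" and k: "k \<noteq> 0"
    and b_def: "b = sqrt (1 + 4 * a\<^sup>2 * c)"
    and b_rat: "b = real n / real m" and m: "m > 0" and cop: "coprime n m"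
    and b0: "b \<noteq> 0" and b1: "b \<noteq> 1"
    and G_def: "G = (\<lambda>z. complex_of_real a * exp z)"
    and F_def: "F = (\<lambda>z. - complex_of_real a * exp (- z))"
    and R_def: "R = (\<lambda>z. exp z / complex_of_real (2 * a * c) *
                  ((1 + complex_of_real b + complex_of_real (1 - b) * k * exp (complex_of_real b * z))
                   / (1 + k * exp (complex_of_real b * z))))"
    and U_def: "U = {z. 1 + k * exp (complex_of_real b * z) \<noteq> 0 \<and>
                     1 + complex_of_real b + complex_of_real (1 - b) * k * exp (complex_of_real b * z) \<noteq> 0}"
    and Gt_def: "Gt = (\<lambda>z. G z + R z)"
    and Ft_def: "Ft = (\<lambda>z. F z + 1 / (complex_of_real c * R z))"
  shows "(\<exists>\<psi>. iam_map U Gt Ft \<psi>) \<and>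
    (\<forall>\<psi>. iam_map U Gt Ft \<psi> \<longrightarrow>
       (\<forall>z\<in>U. z + complex_of_real (2 * real m * pi) * \<i> \<in> U \<and>
               \<psi> (z + complex_of_real (2 * real m * pi) * \<i>) = \<psi> z) \<and>
       (\<exists>K. compact K \<and> K \<subseteq> U \<and>
            singular_set U Gt Ft \<subseteq> (\<Union>j::int. (\<lambda>z. z + of_int j * complex_of_real (2 * real m * pi) * \<i>) ` K)) \<and>
       (\<exists>E. finite E \<and> card E = 2 * n \<and> E \<subseteq> - U \<and>
            (\<forall>p\<in>E. \<forall>q\<in>E. \<forall>j::int. p = q + of_int j * complex_of_real (2 * real m * pi) * \<i> \<longrightarrow> p = q) \<and>
            (\<forall>q\<in>- U. \<exists>p\<in>E. \<exists>j::int. q = p + of_int j * complex_of_real (2 * real m * pi) * \<i>) \<and>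
            (\<forall>p\<in>E. complete_end U Gt Ft p \<and> embedded_end U \<psi> p \<and> end_revolution_type U \<psi> p)))"
proof -
  interpret helicoidal_transform a c b k n m
    using a c k b_def b_rat m b0 b1 by unfold_locales
  have data: "Gt = G\<^sub>t" "Ft = F\<^sub>t" "U = U\<^sub>t"
    by (auto simp: Gt_def G_def R_def G\<^sub>t_def Ft_def F_def F\<^sub>t_def U_def U\<^sub>t_def D\<^sub>1_def D\<^sub>2_def u_def)
  have period: "complex_of_real (2 * real m * pi) * \<i> = shift 1" by (simp add: shift_def)
  show ?thesis
    unfolding data period shift_def[symmetric]
    by (intro conjI allI impI ballI exI[of _ \<psi>\<^sub>t] iam_map_\<psi>\<^sub>t singular_set_in_translates_of_compact
        ends_of_iam_map_U\<^sub>t periodic_iam_map_U\<^sub>t[THEN conjunct1] periodic_iam_map_U\<^sub>t[THEN conjunct2])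
qed

end
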